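(* Let $n\ge2$, $\rho\ge0$, $\xi_n=\frac{n+1}{n-1}$, and let $\lambda_0,\dots,\lambda_{n-1}$ be the eigenvalues of $K_n(\rho)$ labeled as described in the context. Then $K_n(\rho)$ has exactly two extraordinary eigenvalues ($\lambda_0$ and $\lambda_1$) when $\rho>\xi_n$, exactly one ($\lambda_0$) when $1<\rho\le\xi_n$, and none when $0\le\rho\le1$. Furthermore: when $\rho=0$: $\lambda_{n-1}=\dots=\lambda_1=\lambda_0=1$; when $0<\rho<1$: $0<\frac{1-\rho}{1+\rho}<\lambda_{n-1}<\lambda_{n-2}<\dots<\lambda_1<\lambda_0<\frac{1+\rho}{1-\rho}$; when $\rho=1$: $\lambda_1=\dots=\lambda_{n-1}=0<\lambda_0=n$; when $1<\rho<\xi_n$: $-\frac{\rho+1}{\rho-1}<\lambda_1<\lambda_2<\dots<\lambda_{n-1}<-\frac{\rho-1}{\rho+1}<0<n<\lambda_0$; when $\rho=\xi_n$: $-n=\lambda_1<\lambda_2<\dots<\lambda_{n-1}<-\frac1n<0<n<\lambda_0$; when $\rho>\xi_n$: $\lambda_1<-n<-\frac{\rho+1}{\rho-1}<\lambda_2<\dots<\lambda_{n-1}<-\frac{\rho-1}{\rho+1}<0<n<\lambda_0$.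
   Context: $K_n(\rho)=\left[\rho^{|j-k|}\right]_{j,k=1}^n$ (with $\rho^0=1$). Ordinary/extraordinary: with $\sigma(\rho,\theta)=\frac{1-\rho^2}{1-2\rho\cos\theta+\rho^2}$ and $\mathrm{range}\{\sigma(\rho,\theta)\}=\{\sigma(\rho,\theta):\theta\in(-\pi,\pi]\}$, for real $\rho\notin\{\pm1\}$ an eigenvalue is ordinary if it lies in $\mathrm{range}\{\sigma(\rho,\theta)\}$; for $\rho\in\{0,\pm1\}$ all eigenvalues are ordinary; extraordinary means not ordinary. Labeling: $\lambda_k=\frac{1-\rho^2}{1-2\rho\cos\mu_k+\rho^2}=(-1)^k\frac{\sin n\mu_k}{\sin\mu_k}$ (indeterminate forms read as limits), where, with $c_n^{(t)}(\mu)=\frac{\cos\frac{\mu(n+1)}{2}}{\cos\frac{\mu(n-1)}{2}}$, $s_n^{(t)}(\mu)=\frac{\sin\frac{\mu(n+1)}{2}}{\sin\frac{\mu(n-1)}{2}}$, $c_n^{(h)}(x)=c_n^{(t)}(ix)$, $s_n^{(h)}(x)=s_n^{(t)}(ix)$ (extended continuously at $0$), $\alpha_k=\frac{(k-1)\pi}{n-1}$, $\beta_k=\frac{k\pi}{n}$, $\gamma_k=\frac{(k+1)\pi}{n+1}$: $\mu_0=ix_0$ with $x_0$ the unique root of $c_n^{(h)}(x)=\rho$ in $[0,\infty)$ if $\rho\ge1$, and the unique root of $c_n^{(t)}(\mu)=\rho$ in $[0,\gamma_0]$ if $0\le\rho\le1$; $\mu_1=ix_1$ with $x_1$ the unique root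 of $s_n^{(h)}(x)=\rho$ in $[0,\infty)$ if $\rho\ge\xi_n$, the unique root of $s_n^{(t)}(\mu)=\rho$ in $[0,\beta_1]$ if $1\le\rho\le\xi_n$, and in $[\beta_1,\gamma_1]$ if $0\le\rho\le1$; for even $k\ge2$ ($k\le n-1$), $\mu_k$ is the unique root of $c_n^{(t)}(\mu)=\rho$ in $(\alpha_k,\beta_k]$ if $\rho\ge1$ and in $[\beta_k,\gamma_k]$ if $0\le\rho\le1$; for odd $k\ge3$ ($k\le n-1$), the same with $s_n^{(t)}$ in place of $c_n^{(t)}$. *)

theory Defs
  imports Complex_Main "Jordan_Normal_Form.Char_Poly"
begin

text \<open>The Kac-Murdock-Szego matrix K_n(rho) = [rho^|j-k|], indices 0..n-1 (0^0 = 1).\<close>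
definition KMS :: "nat \<Rightarrow> real \<Rightarrow> real mat" where
  "KMS n \<rho> = mat n n (\<lambda>(j,k). \<rho> ^ (if j \<le> k then k - j else j - k))"

definition xi :: "nat \<Rightarrow> real" where
  "xi n = (real n + 1) / (real n - 1)"

definition sigma :: "real \<Rightarrow> real \<Rightarrow> real" where
  "sigma \<rho> \<theta> = (1 - \<rho>\<^sup>2) / (1 - 2 * \<rho> * cos \<theta> + \<rho>\<^sup>2)"

definition ordinary :: "real \<Rightarrow> real \<Rightarrow> bool" where
  "ordinary \<rho> l = (\<rho> \<in> {0, 1, -1} \<or> l \<in> {sigma \<rho> \<theta> | \<theta>. -pi < \<theta> \<and> \<theta> \<le> pi})"

definition extraordinary :: "real \<Rightarrow> real \<Rightarrow> bool" where
  "extraordinary \<rho> l = (\<not> ordinary \<rho> l)"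

text \<open>The functions c_n^(t), s_n^(t), c_n^(h), s_n^(h), continuously extended at 0.
  Away from 0, a root is only accepted where the denominator is nonzero (see ct_ok, st_ok).\<close>
definition ct :: "nat \<Rightarrow> real \<Rightarrow> real" where
  "ct n \<mu> = cos (\<mu> * (real n + 1) / 2) / cos (\<mu> * (real n - 1) / 2)"
definition st :: "nat \<Rightarrow> real \<Rightarrow> real" where
  "st n \<mu> = (if \<mu> = 0 then (real n + 1) / (real n - 1)
             else sin (\<mu> * (real n + 1) / 2) / sin (\<mu> * (real n - 1) / 2))"
definition ch :: "nat \<Rightarrow> real \<Rightarrow> real" where
  "ch n x = cosh (x * (real n + 1) / 2) / cosh (x * (real n - 1) / 2)"
definition sh :: "nat \<Rightarrow> real \<Rightarrow> real" where
  "sh n x = (if x = 0 then (real n + 1) / (real n - 1)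
             else sinh (x * (real n + 1) / 2) / sinh (x * (real n - 1) / 2))"

definition ct_root :: "nat \<Rightarrow> real \<Rightarrow> real \<Rightarrow> bool" where
  "ct_root n \<rho> \<mu> = (cos (\<mu> * (real n - 1) / 2) \<noteq> 0 \<and> ct n \<mu> = \<rho>)"
definition st_root :: "nat \<Rightarrow> real \<Rightarrow> real \<Rightarrow> bool" where
  "st_root n \<rho> \<mu> = ((\<mu> = 0 \<or> sin (\<mu> * (real n - 1) / 2) \<noteq> 0) \<and> st n \<mu> = \<rho>)"

definition alpha :: "nat \<Rightarrow> nat \<Rightarrow> real" where "alpha n k = (real k - 1) * pi / (real n - 1)"
definition beta :: "nat \<Rightarrow> nat \<Rightarrow> real" where "beta n k = real k * pi / real n"
definition gamma :: "nat \<Rightarrow> nat \<Rightarrow> real" where "gamma n k = (real k + 1) * pi / (real n + 1)"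

definition mu :: "nat \<Rightarrow> real \<Rightarrow> nat \<Rightarrow> complex" where
  "mu n \<rho> k =
    (if k = 0 then
       (if \<rho> \<ge> 1 then \<i> * complex_of_real (THE x. 0 \<le> x \<and> ch n x = \<rho>)
        else complex_of_real (THE m. 0 \<le> m \<and> m \<le> gamma n 0 \<and> ct_root n \<rho> m))
     else if k = 1 then
       (if \<rho> \<ge> xi n then \<i> * complex_of_real (THE x. 0 \<le> x \<and> sh n x = \<rho>)
        else if \<rho> \<ge> 1 then complex_of_real (THE m. 0 \<le> m \<and> m \<le> beta n 1 \<and> st_root n \<rho> m)
        else complex_of_real (THE m. beta n 1 \<le> m \<and> m \<le> gamma n 1 \<and> st_root n \<rho> m))
     else if even k then
       (if \<rho> \<ge> 1 then complex_of_real (THE m. alpha n k < m \<and> m \<le> beta n k \<and> ct_root n \<rho> m)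
        else complex_of_real (THE m. beta n k \<le> m \<and> m \<le> gamma n k \<and> ct_root n \<rho> m))
     else
       (if \<rho> \<ge> 1 then complex_of_real (THE m. alpha n k < m \<and> m \<le> beta n k \<and> st_root n \<rho> m)
        else complex_of_real (THE m. beta n k \<le> m \<and> m \<le> gamma n k \<and> st_root n \<rho> m)))"

text \<open>sin(n z)/sin z, read as its limit n cos(n z)/cos z where sin z = 0.\<close>
definition dirichlet_ratio :: "nat \<Rightarrow> complex \<Rightarrow> complex" where
  "dirichlet_ratio n z = (if sin z = 0 then of_nat n * cos (of_nat n * z) / cos z
                          else sin (of_nat n * z) / sin z)"

text \<open>lambda_k = (-1)^k sin(n mu_k)/sin(mu_k) (real for real or purely imaginary mu_k).\<close>
definition lam :: "nat \<Rightarrow> real \<Rightarrow> nat \<Rightarrow> real" where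
  "lam n \<rho> k = Re ((-1) ^ k * dirichlet_ratio n (mu n \<rho> k))"

end

theory Submission
  imports Defs "HOL-Analysis.Complex_Transcendental"
begin

text \<open>
  The tridiagonal matrix \<open>T = (1 - \<rho>\<^sup>2) K\<^sub>n(\<rho>)\<^sup>-\<^sup>1\<close> turns the eigenproblem of \<open>K\<^sub>n(\<rho>)\<close> into a
  three-term recurrence: for \<open>0 < \<rho> \<noteq> 1\<close>, \<open>x\<close> is an eigenvalue of \<open>K\<^sub>n(\<rho>)\<close> iff
  \<open>\<tau> = (1 - \<rho>\<^sup>2) / x\<close> is one of \<open>T\<close>, and writing \<open>\<tau> = 1 + \<rho>\<^sup>2 - 2\<rho>C\<close> an eigenvector solves
  \<open>v\<^sub>j\<^sub>+\<^sub>1 = 2C v\<^sub>j - v\<^sub>j\<^sub>-\<^sub>1\<close> with one boundary condition at each end.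
  If \<open>|C| \<le> 1\<close> then \<open>x = \<sigma>(\<rho>, arccos C)\<close> is ordinary. If \<open>C = cosh t\<close> with \<open>t > 0\<close>, the solution
  is a combination of \<open>sinh (j t)\<close>, and the two boundary conditions together say
  \<open>(sinh A - \<rho> sinh B)(cosh A - \<rho> cosh B) = 0\<close> for \<open>A, B = t (n \<plusminus> 1) / 2\<close>, i.e.
  \<open>c\<^sub>n\<^sup>(\<^sup>h\<^sup>)(t) = \<rho>\<close> or \<open>s\<^sub>n\<^sup>(\<^sup>h\<^sup>)(t) = \<rho>\<close>; the case \<open>C < -1\<close> reduces to \<open>C > 1\<close> with \<open>-\<rho>\<close> in place
  of \<open>\<rho>\<close>, where these equations have no solution. As \<open>c\<^sub>n\<^sup>(\<^sup>h\<^sup>)\<close> increases from \<open>1\<close> and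
  \<open>s\<^sub>n\<^sup>(\<^sup>h\<^sup>)\<close> from \<open>\<xi>\<^sub>n\<close>, the extraordinary eigenvalues are exactly \<open>\<lambda>\<^sub>0\<close> (for \<open>\<rho> > 1\<close>) and
  \<open>\<lambda>\<^sub>1\<close> (for \<open>\<rho> > \<xi>\<^sub>n\<close>). For real \<open>\<mu>\<^sub>k\<close> the same identities give \<open>\<lambda>\<^sub>k = \<sigma>(\<rho>, \<mu>\<^sub>k)\<close>; the
  ordering follows because \<open>c\<^sub>n\<^sup>(\<^sup>t\<^sup>)\<close> and \<open>s\<^sub>n\<^sup>(\<^sup>t\<^sup>)\<close> are strictly monotone between their poles, which
  places the \<open>\<mu>\<^sub>k\<close> in disjoint increasing intervals of \<open>[0, \<pi>]\<close>, and \<open>\<sigma>(\<rho>, \<cdot>)\<close> is monotone there.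
\<close>

section \<open>The tridiagonal inverse of the KMS matrix\<close>

definition kms_apply :: "nat \<Rightarrow> real \<Rightarrow> (nat \<Rightarrow> real) \<Rightarrow> nat \<Rightarrow> real" where
  "kms_apply n \<rho> v j = (\<Sum>l<n. \<rho> ^ (if j \<le> l then l - j else j - l) * v l)"

lemma KMS_mult_vec: "j < n \<Longrightarrow> (KMS n \<rho> *\<^sub>v Matrix.vec n v) $ j = kms_apply n \<rho> v j"
  unfolding KMS_def kms_apply_def by (simp add: scalar_prod_def atLeast0LessThan)

lemma eigenvalue_KMS_iff:
  "eigenvalue (KMS n \<rho>) x \<longleftrightarrow> (\<exists>v. (\<exists>j<n. v j \<noteq> 0) \<and> (\<forall>j<n. kms_apply n \<rho> v j = x * v j))"
proof
  assume "eigenvalue (KMS n \<rho>) x"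
  then obtain w where w: "w \<in> carrier_vec n" "w \<noteq> 0\<^sub>v n" "KMS n \<rho> *\<^sub>v w = x \<cdot>\<^sub>v w"
    unfolding eigenvalue_def eigenvector_def KMS_def by auto
  have w_vec: "w = Matrix.vec n (\<lambda>j. w $ j)"
    using w(1) by auto
  have "\<exists>j<n. w $ j \<noteq> 0"
    using w(1,2) by (metis eq_vecI index_zero_vec(1,2) carrier_vecD)
  moreover have "kms_apply n \<rho> (\<lambda>j. w $ j) j = x * w $ j" if "j < n" for j
    using arg_cong[OF w(3), of "\<lambda>u. u $ j"] KMS_mult_vec[OF that, of \<rho> "\<lambda>j. w $ j"] w_vec w(1) that
    by simp
  ultimately show "\<exists>v. (\<exists>j<n. v j \<noteq> 0) \<and> (\<forall>j<n. kms_apply n \<rho> v j = x * v j)"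
    by blast
next
  assume "\<exists>v. (\<exists>j<n. v j \<noteq> 0) \<and> (\<forall>j<n. kms_apply n \<rho> v j = x * v j)"
  then obtain v where v: "\<exists>j<n. v j \<noteq> 0" "\<forall>j<n. kms_apply n \<rho> v j = x * v j"
    by blast
  have "Matrix.vec n v \<noteq> 0\<^sub>v n"
    using v(1) by (metis index_vec index_zero_vec(1))
  moreover have "KMS n \<rho> *\<^sub>v Matrix.vec n v = x \<cdot>\<^sub>v Matrix.vec n v"
    by (rule eq_vecI) (simp_all add: KMS_mult_vec v(2), simp_all add: KMS_def)
  ultimately show "eigenvalue (KMS n \<rho>) x"
    unfolding eigenvalue_def eigenvector_def
    by (intro exI[of _ "Matrix.vec n v"]) (simp add: KMS_def)
qed

text \<open>The tridiagonal matrix \<open>(1 - \<rho>\<^sup>2) K\<^sub>n(\<rho>)\<^sup>-\<^sup>1\<close>.\<close>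

definition kms_tridiag :: "nat \<Rightarrow> real \<Rightarrow> (nat \<Rightarrow> real) \<Rightarrow> nat \<Rightarrow> real" where
  "kms_tridiag n \<rho> w j =
    (if j = 0 then w 0 - \<rho> * w 1
     else if j = n - 1 then - \<rho> * w (n - 2) + w (n - 1)
     else - \<rho> * w (j - 1) + (1 + \<rho>\<^sup>2) * w j - \<rho> * w (j + 1))"

lemma kms_tridiag_sum:
  "kms_tridiag n \<rho> (\<lambda>i. \<Sum>l\<in>L. c l * f l i) j = (\<Sum>l\<in>L. c l * kms_tridiag n \<rho> (f l) j)"
  unfolding kms_tridiag_def
  by (simp add: sum_distrib_left sum_subtractf[symmetric] sum.distrib[symmetric] algebra_simps)

lemma kms_tridiag_scale: "kms_tridiag n \<rho> (\<lambda>i. c * f i) j = c * kms_tridiag n \<rho> f j"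
  unfolding kms_tridiag_def by (simp add: algebra_simps)

lemma kms_tridiag_diff: "kms_tridiag n \<rho> (\<lambda>i. f i - g i) j = kms_tridiag n \<rho> f j - kms_tridiag n \<rho> g j"
  unfolding kms_tridiag_def by (simp add: algebra_simps)

lemma kms_tridiag_cong:
  assumes "2 \<le> n" "j < n" "\<And>i. i < n \<Longrightarrow> f i = g i"
  shows "kms_tridiag n \<rho> f j = kms_tridiag n \<rho> g j"
  using assms unfolding kms_tridiag_def by auto

lemma kms_tridiag_column:
  fixes \<rho> :: real
  assumes "2 \<le> n" "j < n" "l < n"
  shows "kms_tridiag n \<rho> (\<lambda>i. \<rho> ^ (if i \<le> l then l - i else i - l)) j = (if j = l then 1 - \<rho>\<^sup>2 else 0)"
proof -
  have last: "j = n - 1 \<longleftrightarrow> n = j + 1"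
    using assms by auto
  consider "l < j" | "l = j" | "j < l" by linarith
  then show ?thesis
  proof cases
    case 1
    then obtain d where d: "j = l + Suc d" using less_iff_Suc_add by auto
    show ?thesis
      using 1 assms unfolding kms_tridiag_def last
      by (simp add: d) (cases d; simp add: power2_eq_square algebra_simps)
  next
    case 2
    then show ?thesis
      using assms by (simp add: kms_tridiag_def power2_eq_square)
  next
    case 3
    then obtain d where d: "l = j + Suc d" using less_iff_Suc_add by auto
    show ?thesis
      using 3 assms unfolding kms_tridiag_def last
      by (simp add: d) (cases d; simp add: power2_eq_square algebra_simps)
  qed
qed

lemma kms_tridiag_kms_apply:
  assumes "2 \<le> n" "j < n"
  shows "kms_tridiag n \<rho> (kms_apply n \<rho> v) j = (1 - \<rho>\<^sup>2) * v j"
proof -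
  have "kms_tridiag n \<rho> (kms_apply n \<rho> v) j
      = (\<Sum>l<n. v l * kms_tridiag n \<rho> (\<lambda>i. \<rho> ^ (if i \<le> l then l - i else i - l)) j)"
    unfolding kms_apply_def using kms_tridiag_sum[of n \<rho> v] by (simp add: mult.commute)
  also have "\<dots> = (\<Sum>l<n. if l = j then (1 - \<rho>\<^sup>2) * v j else 0)"
    using assms by (intro sum.cong) (auto simp: kms_tridiag_column)
  finally show ?thesis
    using assms by simp
qed

lemma chebyshev_recurrence_unique:
  fixes u w :: "nat \<Rightarrow> 'a::comm_ring"
  assumes "u 0 = w 0" "u 1 = w 1"
    and "\<And>j. 0 < j \<Longrightarrow> j + 1 < n \<Longrightarrow> u (j + 1) = a * u j - u (j - 1)"
    and "\<And>j. 0 < j \<Longrightarrow> j + 1 < n \<Longrightarrow> w (j + 1) = a * w j - w (j - 1)"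
    and "j < n"
  shows "u j = w j"
  using \<open>j < n\<close>
proof (induction j rule: less_induct)
  case (less j)
  show ?case
  proof (cases "j < 2")
    case True
    then show ?thesis
      using assms(1,2) by (cases j) auto
  next
    case False
    then obtain i where j: "j = i + 2"
      by (metis add.commute le_add_diff_inverse not_less)
    have "u j = a * u (i + 1) - u i" "w j = a * w (i + 1) - w i"
      using assms(3,4)[of "i + 1"] less.prems j by (simp_all add: numeral_2_eq_2)
    then show ?thesis
      using less.IH[of "i + 1"] less.IH[of i] less.prems j by simp
  qed
qed

lemma kms_tridiag_injective:
  fixes \<rho> :: real
  assumes n: "2 \<le> n" and \<rho>: "\<rho> \<noteq> 0" "\<rho>\<^sup>2 \<noteq> 1"
    and z: "\<And>j. j < n \<Longrightarrow> kms_tridiag n \<rho> z j = 0" and "j < n"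
  shows "z j = 0"
proof -
  have geometric: "z i = z 0 / \<rho> ^ i" if "i < n" for i
  proof (rule chebyshev_recurrence_unique[where a = "(1 + \<rho>\<^sup>2) / \<rho>"])
    show "z 1 = z 0 / \<rho> ^ 1"
      using z[of 0] n \<rho> by (simp add: kms_tridiag_def field_simps)
    show "z (i + 1) = (1 + \<rho>\<^sup>2) / \<rho> * z i - z (i - 1)" if "0 < i" "i + 1 < n" for i
    proof -
      have "i \<noteq> n - 1"
        using that by simp
      then show ?thesis
        using z[of i] that \<rho> by (simp add: kms_tridiag_def field_simps power2_eq_square)
    qed
    show "z 0 / \<rho> ^ (i + 1) = (1 + \<rho>\<^sup>2) / \<rho> * (z 0 / \<rho> ^ i) - z 0 / \<rho> ^ (i - 1)" if "0 < i" for i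
      using that \<rho> by (cases i) (simp_all add: field_simps power2_eq_square)
  qed (use that in simp_all)
  have "n - 1 = Suc (n - 2)"
    using n by simp
  then have "z (n - 1) = z (n - 2) / \<rho>"
    using geometric[of "n - 1"] geometric[of "n - 2"] n by (simp add: divide_divide_eq_left mult.commute)
  then have "(1 - \<rho>\<^sup>2) * z (n - 2) = \<rho> * kms_tridiag n \<rho> z (n - 1)"
    using n \<rho> by (simp add: kms_tridiag_def field_simps power2_eq_square)
  also have "\<dots> = 0"
    using z n by simp
  finally have "z 0 = 0"
    using geometric[of "n - 2"] n \<rho> by simp
  then show ?thesis
    using geometric[OF \<open>j < n\<close>] by simp
qed

lemma kms_eigen_imp_tridiag_eigen:
  fixes \<rho> :: real
  assumes n: "2 \<le> n" and \<rho>: "\<rho>\<^sup>2 \<noteq> 1"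
    and v: "\<forall>j<n. kms_apply n \<rho> v j = x * v j" and nonzero: "\<exists>j<n. v j \<noteq> 0"
  shows "x \<noteq> 0" and "\<forall>j<n. kms_tridiag n \<rho> v j = (1 - \<rho>\<^sup>2) / x * v j"
proof -
  have key: "x * kms_tridiag n \<rho> v j = (1 - \<rho>\<^sup>2) * v j" if "j < n" for j
  proof -
    have "kms_tridiag n \<rho> (kms_apply n \<rho> v) j = kms_tridiag n \<rho> (\<lambda>i. x * v i) j"
      using n that v by (intro kms_tridiag_cong) auto
    then show ?thesis
      using kms_tridiag_kms_apply[OF n that] by (simp add: kms_tridiag_scale)
  qed
  show "x \<noteq> 0"
    using key nonzero \<rho> by force
  then show "\<forall>j<n. kms_tridiag n \<rho> v j = (1 - \<rho>\<^sup>2) / x * v j"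
    using key by (simp add: field_simps)
qed

lemma tridiag_eigen_imp_eigenvalue_KMS:
  fixes \<rho> :: real
  assumes n: "2 \<le> n" and \<rho>: "\<rho> \<noteq> 0" "\<rho>\<^sup>2 \<noteq> 1" and "\<tau> \<noteq> 0"
    and w: "\<forall>j<n. kms_tridiag n \<rho> w j = \<tau> * w j" and nonzero: "\<exists>j<n. w j \<noteq> 0"
  shows "eigenvalue (KMS n \<rho>) ((1 - \<rho>\<^sup>2) / \<tau>)"
proof -
  let ?c = "(1 - \<rho>\<^sup>2) / \<tau>"
  have "kms_tridiag n \<rho> (\<lambda>i. kms_apply n \<rho> w i - ?c * w i) j = 0" if "j < n" for j
    unfolding kms_tridiag_diff kms_tridiag_scale kms_tridiag_kms_apply[OF n that]
    using w that \<open>\<tau> \<noteq> 0\<close> by simp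
  then have "kms_apply n \<rho> w j = ?c * w j" if "j < n" for j
    using kms_tridiag_injective[OF n \<rho>, of "\<lambda>i. kms_apply n \<rho> w i - ?c * w i" j] that by simp
  then show ?thesis
    unfolding eigenvalue_KMS_iff using nonzero by blast
qed

section \<open>Hyperbolic eigenvectors\<close>

lemma kms_tridiag_alternate:
  "kms_tridiag n (- \<rho>) (\<lambda>i. (-1) ^ i * v i) j = (-1) ^ j * kms_tridiag n \<rho> v j"
proof (cases "j = 0")
  case False
  then have sign: "(-1::real) ^ (j - 1) = - ((-1) ^ j)" "(-1::real) ^ (j + 1) = - ((-1) ^ j)"
    by (cases j; simp)+
  show ?thesis
  proof (cases "j = n - 1")
    case True
    then have "n - 2 = j - 1"
      by simp
    then show ?thesis
      using False True sign(1) unfolding kms_tridiag_def by (simp add: algebra_simps)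
  next
    case False
    then show ?thesis
      using \<open>j \<noteq> 0\<close> sign unfolding kms_tridiag_def by (simp add: algebra_simps)
  qed
qed (simp add: kms_tridiag_def)

lemma kms_tridiag_eigen_recurrence:
  fixes \<rho> C :: real
  assumes \<rho>: "\<rho> \<noteq> 0" and n: "2 \<le> n"
    and v: "\<forall>j<n. kms_tridiag n \<rho> v j = (1 + \<rho>\<^sup>2 - 2 * \<rho> * C) * v j"
  shows "v 1 = (2 * C - \<rho>) * v 0"
    and "\<And>j. 0 < j \<Longrightarrow> j + 1 < n \<Longrightarrow> v (j + 1) = 2 * C * v j - v (j - 1)"
    and "v (n - 2) = (2 * C - \<rho>) * v (n - 1)"
proof -
  have "\<rho> * v 1 = \<rho> * ((2 * C - \<rho>) * v 0)"
    using v[rule_format, of 0] n by (simp add: kms_tridiag_def power2_eq_square algebra_simps)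
  then show "v 1 = (2 * C - \<rho>) * v 0"
    using \<rho> by simp
  show "v (j + 1) = 2 * C * v j - v (j - 1)" if "0 < j" "j + 1 < n" for j
  proof -
    have "j \<noteq> n - 1"
      using that by simp
    then have "\<rho> * v (j + 1) = \<rho> * (2 * C * v j - v (j - 1))"
      using v[rule_format, of j] that by (simp add: kms_tridiag_def power2_eq_square algebra_simps)
    then show ?thesis
      using \<rho> by simp
  qed
  have "\<rho> * v (n - 2) = \<rho> * ((2 * C - \<rho>) * v (n - 1))"
    using v[rule_format, of "n - 1"] n by (simp add: kms_tridiag_def power2_eq_square algebra_simps)
  then show "v (n - 2) = (2 * C - \<rho>) * v (n - 1)"
    using \<rho> by simp
qed

lemma sinh_add_diff: "sinh (x + t) + sinh (x - t) = 2 * cosh t * sinh x" for x t :: real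
  by (simp add: sinh_add sinh_diff)

lemma sinh_shift_recurrence:
  fixes x t r :: real
  shows "sinh ((x + 2) * t) - r * sinh ((x + 1) * t)
       = 2 * cosh t * (sinh ((x + 1) * t) - r * sinh (x * t)) - (sinh (x * t) - r * sinh ((x - 1) * t))"
proof -
  have h2: "sinh ((x + 2) * t) = 2 * cosh t * sinh ((x + 1) * t) - sinh (x * t)"
    using sinh_add_diff[of "(x + 1) * t" t] by (simp add: algebra_simps)
  have h1: "sinh ((x + 1) * t) = 2 * cosh t * sinh (x * t) - sinh ((x - 1) * t)"
    using sinh_add_diff[of "x * t" t] by (simp add: algebra_simps)
  show ?thesis
    unfolding h2 h1 by (simp add: algebra_simps)
qed

lemma sinh_secular_cases:
  fixes x t r :: real
  assumes "sinh ((x + 1) * t) - r * sinh (x * t) = r * (sinh (x * t) - r * sinh ((x - 1) * t))"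
  shows "sinh (t * (x + 1) / 2) = r * sinh (t * (x - 1) / 2)
       \<or> cosh (t * (x + 1) / 2) = r * cosh (t * (x - 1) / 2)"
proof -
  define A where "A = t * (x + 1) / 2"
  define B where "B = t * (x - 1) / 2"
  have AB: "(x + 1) * t = 2 * A" "(x - 1) * t = 2 * B" "x * t = A + B"
    unfolding A_def B_def by (simp_all add: field_simps)
  have "sinh (2 * A) - 2 * r * sinh (A + B) + r\<^sup>2 * sinh (2 * B) = 0"
    using assms unfolding AB by (simp add: power2_eq_square algebra_simps)
  moreover have "sinh (2 * A) - 2 * r * sinh (A + B) + r\<^sup>2 * sinh (2 * B)
      = 2 * (sinh A - r * sinh B) * (cosh A - r * cosh B)"
    unfolding sinh_double sinh_add by (simp add: algebra_simps power2_eq_square)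
  ultimately show ?thesis
    unfolding A_def B_def by auto
qed

lemma kms_tridiag_hyperbolic_secular:
  fixes r t :: real
  assumes n: "2 \<le> n" and r: "r \<noteq> 0" and t: "0 < t"
    and v: "\<forall>j<n. kms_tridiag n r v j = (1 + r\<^sup>2 - 2 * r * cosh t) * v j"
    and nonzero: "\<exists>j<n. v j \<noteq> 0"
  shows "sinh (t * (real n + 1) / 2) = r * sinh (t * (real n - 1) / 2)
       \<or> cosh (t * (real n + 1) / 2) = r * cosh (t * (real n - 1) / 2)"
proof -
  define \<phi> where "\<phi> j = sinh ((real j + 1) * t) - r * sinh (real j * t)" for j :: nat
  have \<phi>_rec: "\<phi> (j + 1) = 2 * cosh t * \<phi> j - \<phi> (j - 1)" if "0 < j" for j
  proof -
    have "\<phi> (j + 1) = sinh ((real j + 2) * t) - r * sinh ((real j + 1) * t)"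
      "\<phi> j = sinh ((real j + 1) * t) - r * sinh (real j * t)"
      "\<phi> (j - 1) = sinh (real j * t) - r * sinh ((real j - 1) * t)"
      unfolding \<phi>_def using that by (simp_all add: of_nat_diff add.commute)
    then show ?thesis
      using sinh_shift_recurrence[of "real j" t r] by simp
  qed
  note R = kms_tridiag_eigen_recurrence[OF r n v]
  have v_eq: "v j = v 0 / sinh t * \<phi> j" if "j < n" for j
  proof (rule chebyshev_recurrence_unique[where a = "2 * cosh t"])
    show "v 0 = v 0 / sinh t * \<phi> 0"
      using t by (simp add: \<phi>_def)
    have "\<phi> 1 = (2 * cosh t - r) * sinh t"
      using sinh_double[of t] by (simp add: \<phi>_def mult.commute algebra_simps)
    then show "v 1 = v 0 / sinh t * \<phi> 1"
      using R(1) t by simp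
    show "v 0 / sinh t * \<phi> (i + 1) = 2 * cosh t * (v 0 / sinh t * \<phi> i) - v 0 / sinh t * \<phi> (i - 1)"
      if "0 < i" for i
      unfolding \<phi>_rec[OF that] by (simp add: right_diff_distrib mult.left_commute)
  qed (use R(2) that in auto)
  have "v 0 \<noteq> 0"
    using nonzero v_eq by fastforce
  then have "\<phi> (n - 2) = (2 * cosh t - r) * \<phi> (n - 1)"
    using R(3) v_eq[of "n - 2"] v_eq[of "n - 1"] n t by simp
  moreover have "\<phi> n = 2 * cosh t * \<phi> (n - 1) - \<phi> (n - 2)"
    using \<phi>_rec[of "n - 1"] n by (simp add: numeral_2_eq_2)
  ultimately have "\<phi> n = r * \<phi> (n - 1)"
    by (simp add: algebra_simps)
  then show ?thesis
    using sinh_secular_cases[of "real n" t r] n by (simp add: \<phi>_def of_nat_diff)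
qed

lemma kms_tridiag_no_large_eigenvalue:
  fixes \<rho> t :: real
  assumes n: "2 \<le> n" and \<rho>: "0 < \<rho>" and t: "0 < t" and nonzero: "\<exists>j<n. v j \<noteq> 0"
  shows "\<not> (\<forall>j<n. kms_tridiag n \<rho> v j = (1 + \<rho>\<^sup>2 + 2 * \<rho> * cosh t) * v j)"
proof
  assume "\<forall>j<n. kms_tridiag n \<rho> v j = (1 + \<rho>\<^sup>2 + 2 * \<rho> * cosh t) * v j"
  then have alt: "\<forall>j<n. kms_tridiag n (- \<rho>) (\<lambda>i. (-1) ^ i * v i) j
      = (1 + (- \<rho>)\<^sup>2 - 2 * (- \<rho>) * cosh t) * ((-1) ^ j * v j)"
    unfolding kms_tridiag_alternate by simp
  have "\<exists>j<n. (-1) ^ j * v j \<noteq> 0"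
    using nonzero by auto
  then have "sinh (t * (real n + 1) / 2) = - \<rho> * sinh (t * (real n - 1) / 2)
      \<or> cosh (t * (real n + 1) / 2) = - \<rho> * cosh (t * (real n - 1) / 2)"
    using kms_tridiag_hyperbolic_secular[OF n _ t alt] \<rho> by simp
  moreover have "0 < sinh (t * (real n + 1) / 2)" "0 < \<rho> * sinh (t * (real n - 1) / 2)"
    "0 < \<rho> * cosh (t * (real n - 1) / 2)"
    using t n \<rho> by simp_all
  ultimately show False
    using cosh_real_pos[of "t * (real n + 1) / 2"] by linarith
qed

lemma ordinary_if_abs_le_1:
  fixes \<rho> C :: real
  assumes "\<bar>C\<bar> \<le> 1"
  shows "ordinary \<rho> ((1 - \<rho>\<^sup>2) / (1 + \<rho>\<^sup>2 - 2 * \<rho> * C))"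
proof -
  have "0 \<le> arccos C" "arccos C \<le> pi" "sigma \<rho> (arccos C) = (1 - \<rho>\<^sup>2) / (1 + \<rho>\<^sup>2 - 2 * \<rho> * C)"
    using arccos[of C] assms unfolding sigma_def by (auto simp: algebra_simps)
  then show ?thesis
    unfolding ordinary_def using pi_gt_zero by (smt (verit) mem_Collect_eq)
qed

lemma extraordinary_eigenvalue_hyperbolic:
  fixes \<rho> x :: real
  assumes n: "2 \<le> n" and \<rho>: "0 < \<rho>" "\<rho> \<noteq> 1"
    and eig: "eigenvalue (KMS n \<rho>) x" and extra: "extraordinary \<rho> x"
  obtains t where "0 < t"
    and "cosh (t * (real n + 1) / 2) = \<rho> * cosh (t * (real n - 1) / 2)
       \<or> sinh (t * (real n + 1) / 2) = \<rho> * sinh (t * (real n - 1) / 2)"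
    and "x = (1 - \<rho>\<^sup>2) / (1 + \<rho>\<^sup>2 - 2 * \<rho> * cosh t)"
proof -
  have \<rho>2: "\<rho>\<^sup>2 \<noteq> 1"
    using \<rho> by (simp add: power2_eq_1_iff)
  obtain v where nonzero: "\<exists>j<n. v j \<noteq> 0" and v: "\<forall>j<n. kms_apply n \<rho> v j = x * v j"
    using eig unfolding eigenvalue_KMS_iff by blast
  define C where "C = (1 + \<rho>\<^sup>2 - (1 - \<rho>\<^sup>2) / x) / (2 * \<rho>)"
  have \<tau>: "(1 - \<rho>\<^sup>2) / x = 1 + \<rho>\<^sup>2 - 2 * \<rho> * C"
    using \<rho> unfolding C_def by simp
  have x: "x \<noteq> 0" and T: "\<forall>j<n. kms_tridiag n \<rho> v j = (1 + \<rho>\<^sup>2 - 2 * \<rho> * C) * v j"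
    using kms_eigen_imp_tridiag_eigen[OF n \<rho>2 v nonzero] unfolding \<tau> by auto
  have x_eq: "x = (1 - \<rho>\<^sup>2) / (1 + \<rho>\<^sup>2 - 2 * \<rho> * C)"
    unfolding \<tau>[symmetric] using x \<rho>2 by simp
  have "\<not> \<bar>C\<bar> \<le> 1"
    using ordinary_if_abs_le_1[of C \<rho>] extra unfolding x_eq extraordinary_def by blast
  moreover have "\<not> C < -1"
  proof
    assume "C < -1"
    then have "0 < arcosh (- C)" "cosh (arcosh (- C)) = - C"
      by auto
    then show False
      using kms_tridiag_no_large_eigenvalue[OF n \<rho>(1) _ nonzero] T by fastforce
  qed
  ultimately have "0 < arcosh C" "cosh (arcosh C) = C"
    by auto
  moreover from this have "sinh (arcosh C * (real n + 1) / 2) = \<rho> * sinh (arcosh C * (real n - 1) / 2)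
      \<or> cosh (arcosh C * (real n + 1) / 2) = \<rho> * cosh (arcosh C * (real n - 1) / 2)"
    using kms_tridiag_hyperbolic_secular[OF n _ _ _ nonzero] \<rho> T by simp
  ultimately show ?thesis
    using that[of "arcosh C"] x_eq by auto
qed

lemma cos_squared_diff: "(cos B)\<^sup>2 - (cos A)\<^sup>2 = sin (A + B) * sin (A - B)" for A B :: real
proof -
  have "sin (A + B) * sin (A - B) = (sin A)\<^sup>2 * (cos B)\<^sup>2 - (cos A)\<^sup>2 * (sin B)\<^sup>2"
    by (simp add: sin_add sin_diff power2_eq_square algebra_simps)
  then show ?thesis
    by (simp add: sin_squared_eq algebra_simps)
qed

lemma cos_law: "(cos A)\<^sup>2 + (cos B)\<^sup>2 - 2 * cos A * cos B * cos (A - B) = (sin (A - B))\<^sup>2" for A B :: real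
proof -
  have "(sin (A - B))\<^sup>2 = (sin A)\<^sup>2 * (cos B)\<^sup>2 + (cos A)\<^sup>2 * (sin B)\<^sup>2 - 2 * sin A * sin B * cos A * cos B"
    by (simp add: sin_diff power2_eq_square algebra_simps)
  also have "\<dots> = (1 - (cos A)\<^sup>2) * (cos B)\<^sup>2 + (cos A)\<^sup>2 * (1 - (cos B)\<^sup>2) - 2 * sin A * sin B * cos A * cos B"
    by (simp add: sin_squared_eq)
  also have "\<dots> = (cos A)\<^sup>2 + (cos B)\<^sup>2 - 2 * cos A * cos B * cos (A - B)"
    by (simp add: cos_diff power2_eq_square algebra_simps)
  finally show ?thesis ..
qed

lemma cosh_squared_diff: "(cosh B)\<^sup>2 - (cosh A)\<^sup>2 = - sinh (A + B) * sinh (A - B)" for A B :: real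
proof -
  have "sinh (A + B) * sinh (A - B) = (sinh A)\<^sup>2 * (cosh B)\<^sup>2 - (cosh A)\<^sup>2 * (sinh B)\<^sup>2"
    by (simp add: sinh_add sinh_diff power2_eq_square algebra_simps)
  then show ?thesis
    by (simp add: sinh_square_eq algebra_simps)
qed

lemma sinh_squared_diff: "(sinh B)\<^sup>2 - (sinh A)\<^sup>2 = - sinh (A + B) * sinh (A - B)" for A B :: real
  using cosh_squared_diff[of B A] by (simp add: sinh_square_eq)

lemma cosh_law: "(cosh A)\<^sup>2 + (cosh B)\<^sup>2 - 2 * cosh A * cosh B * cosh (A - B) = - (sinh (A - B))\<^sup>2" for A B :: real
proof -
  have "(sinh (A - B))\<^sup>2 = (sinh A)\<^sup>2 * (cosh B)\<^sup>2 + (cosh A)\<^sup>2 * (sinh B)\<^sup>2 - 2 * sinh A * sinh B * cosh A * cosh B"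
    by (simp add: sinh_diff power2_eq_square algebra_simps)
  also have "\<dots> = ((cosh A)\<^sup>2 - 1) * (cosh B)\<^sup>2 + (cosh A)\<^sup>2 * ((cosh B)\<^sup>2 - 1) - 2 * sinh A * sinh B * cosh A * cosh B"
    by (simp add: sinh_square_eq)
  also have "\<dots> = - ((cosh A)\<^sup>2 + (cosh B)\<^sup>2 - 2 * cosh A * cosh B * cosh (A - B))"
    by (simp add: cosh_diff power2_eq_square algebra_simps)
  finally show ?thesis
    by simp
qed

lemma sinh_law: "(sinh A)\<^sup>2 + (sinh B)\<^sup>2 - 2 * sinh A * sinh B * cosh (A - B) = (sinh (A - B))\<^sup>2" for A B :: real
proof -
  have "(sinh (A - B))\<^sup>2 = (sinh A)\<^sup>2 * (cosh B)\<^sup>2 + (cosh A)\<^sup>2 * (sinh B)\<^sup>2 - 2 * sinh A * sinh B * cosh A * cosh B"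
    by (simp add: sinh_diff power2_eq_square algebra_simps)
  also have "\<dots> = (sinh A)\<^sup>2 * ((sinh B)\<^sup>2 + 1) + ((sinh A)\<^sup>2 + 1) * (sinh B)\<^sup>2 - 2 * sinh A * sinh B * cosh A * cosh B"
    by (simp add: cosh_square_eq)
  also have "\<dots> = (sinh A)\<^sup>2 + (sinh B)\<^sup>2 - 2 * sinh A * sinh B * cosh (A - B)"
    by (simp add: cosh_diff power2_eq_square algebra_simps)
  finally show ?thesis ..
qed

lemma cosh_root_value:
  fixes \<rho> t :: real
  assumes t: "t \<noteq> 0" and root: "cosh (t * (real n + 1) / 2) = \<rho> * cosh (t * (real n - 1) / 2)"
  shows "1 + \<rho>\<^sup>2 - 2 * \<rho> * cosh t < 0"
    and "(1 - \<rho>\<^sup>2) / (1 + \<rho>\<^sup>2 - 2 * \<rho> * cosh t) = sinh (real n * t) / sinh t"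
proof -
  define A where "A = t * (real n + 1) / 2"
  define B where "B = t * (real n - 1) / 2"
  have AB: "A - B = t" "A + B = real n * t"
    unfolding A_def B_def by (simp_all add: field_simps)
  have root': "cosh A = \<rho> * cosh B"
    using root unfolding A_def B_def .
  have den: "(1 + \<rho>\<^sup>2 - 2 * \<rho> * cosh t) * (cosh B)\<^sup>2 = - (sinh t)\<^sup>2"
    using cosh_law[where A = A and B = B] unfolding AB root' by (simp add: power2_eq_square algebra_simps)
  have num: "(1 - \<rho>\<^sup>2) * (cosh B)\<^sup>2 = - sinh (real n * t) * sinh t"
    using cosh_squared_diff[where A = A and B = B] unfolding AB root' by (simp add: power2_eq_square algebra_simps)
  have "0 < (sinh t)\<^sup>2" "0 < (cosh B)\<^sup>2"
    using t by simp_all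
  then show "1 + \<rho>\<^sup>2 - 2 * \<rho> * cosh t < 0"
    using den by (smt (verit) mult_nonneg_nonneg)
  have "(1 - \<rho>\<^sup>2) / (1 + \<rho>\<^sup>2 - 2 * \<rho> * cosh t)
      = ((1 - \<rho>\<^sup>2) * (cosh B)\<^sup>2) / ((1 + \<rho>\<^sup>2 - 2 * \<rho> * cosh t) * (cosh B)\<^sup>2)"
    by simp
  also have "\<dots> = sinh (real n * t) / sinh t"
    unfolding den num using t by (simp add: power2_eq_square)
  finally show "(1 - \<rho>\<^sup>2) / (1 + \<rho>\<^sup>2 - 2 * \<rho> * cosh t) = sinh (real n * t) / sinh t" .
qed

lemma sinh_root_value:
  fixes \<rho> t :: real
  assumes n: "2 \<le> n" and t: "0 < t"
    and root: "sinh (t * (real n + 1) / 2) = \<rho> * sinh (t * (real n - 1) / 2)"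
  shows "0 < 1 + \<rho>\<^sup>2 - 2 * \<rho> * cosh t"
    and "(1 - \<rho>\<^sup>2) / (1 + \<rho>\<^sup>2 - 2 * \<rho> * cosh t) = - (sinh (real n * t) / sinh t)"
proof -
  define A where "A = t * (real n + 1) / 2"
  define B where "B = t * (real n - 1) / 2"
  have AB: "A - B = t" "A + B = real n * t"
    unfolding A_def B_def by (simp_all add: field_simps)
  have root': "sinh A = \<rho> * sinh B"
    using root unfolding A_def B_def .
  have den: "(1 + \<rho>\<^sup>2 - 2 * \<rho> * cosh t) * (sinh B)\<^sup>2 = (sinh t)\<^sup>2"
    using sinh_law[where A = A and B = B] unfolding AB root' by (simp add: power2_eq_square algebra_simps)
  have num: "(1 - \<rho>\<^sup>2) * (sinh B)\<^sup>2 = - sinh (real n * t) * sinh t"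
    using sinh_squared_diff[where A = A and B = B] unfolding AB root' by (simp add: power2_eq_square algebra_simps)
  have "0 < (sinh t)\<^sup>2" "0 < (sinh B)\<^sup>2"
    using t n unfolding B_def by simp_all
  then show "0 < 1 + \<rho>\<^sup>2 - 2 * \<rho> * cosh t"
    using den by (smt (verit) mult_nonpos_nonneg)
  have "(1 - \<rho>\<^sup>2) / (1 + \<rho>\<^sup>2 - 2 * \<rho> * cosh t)
      = ((1 - \<rho>\<^sup>2) * (sinh B)\<^sup>2) / ((1 + \<rho>\<^sup>2 - 2 * \<rho> * cosh t) * (sinh B)\<^sup>2)"
    using \<open>0 < (sinh B)\<^sup>2\<close> by simp
  also have "\<dots> = - (sinh (real n * t) / sinh t)"
    unfolding den num using t by (simp add: power2_eq_square)
  finally show "(1 - \<rho>\<^sup>2) / (1 + \<rho>\<^sup>2 - 2 * \<rho> * cosh t) = - (sinh (real n * t) / sinh t)" .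
qed

lemma cosh_sinh_add_diff:
  fixes F :: "real \<Rightarrow> real"
  assumes "F = cosh \<or> F = sinh"
  shows "F (\<theta> - t) + F (\<theta> + t) = 2 * cosh t * F \<theta>"
  using assms by (auto simp: cosh_add cosh_diff sinh_add sinh_diff)

lemma cosh_sinh_root_edge:
  fixes F :: "real \<Rightarrow> real"
  assumes F: "F = cosh \<or> F = sinh" and root: "F (q + t) = \<rho> * F q"
  shows "F q - \<rho> * F (q - t) = (1 + \<rho>\<^sup>2 - 2 * \<rho> * cosh t) * F q"
proof -
  have qt: "F (q - t) = 2 * cosh t * F q - \<rho> * F q"
    using cosh_sinh_add_diff[OF F, of q t] root by simp
  show ?thesis
    unfolding qt by (simp add: power2_eq_square algebra_simps)
qed

lemma kms_tridiag_centered_eigen: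
  fixes F :: "real \<Rightarrow> real" and \<rho> t :: real
  assumes n: "2 \<le> n" and F: "F = cosh \<or> F = sinh"
    and root: "F (t * (real n + 1) / 2) = \<rho> * F (t * (real n - 1) / 2)" and j: "j < n"
  shows "kms_tridiag n \<rho> (\<lambda>i. F ((real i - (real n - 1) / 2) * t)) j
       = (1 + \<rho>\<^sup>2 - 2 * \<rho> * cosh t) * F ((real j - (real n - 1) / 2) * t)"
proof -
  define q where "q = (real n - 1) / 2 * t"
  define w where "w i = F ((real i - (real n - 1) / 2) * t)" for i
  define \<tau> where "\<tau> = 1 + \<rho>\<^sup>2 - 2 * \<rho> * cosh t"
  have "F (q + t) = \<rho> * F q"
    using root unfolding q_def by (simp add: field_simps)
  then have edge: "F q - \<rho> * F (q - t) = \<tau> * F q"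
    unfolding \<tau>_def by (rule cosh_sinh_root_edge[OF F])
  consider "j = 0" | "j \<noteq> 0" "j = n - 1" | "j \<noteq> 0" "j \<noteq> n - 1"
    by blast
  then have "kms_tridiag n \<rho> w j = \<tau> * w j"
  proof cases
    case 1
    obtain s :: real where "\<And>y. F (- y) = s * F y"
      using F by (metis cosh_minus sinh_minus mult_1 mult_minus1)
    moreover have "(real 0 - (real n - 1) / 2) * t = - q" "(real 1 - (real n - 1) / 2) * t = - (q - t)"
      unfolding q_def by (simp_all add: algebra_simps)
    ultimately have w01: "w 0 = s * F q" "w 1 = s * F (q - t)"
      unfolding w_def by metis+
    then have "kms_tridiag n \<rho> w j = s * (F q - \<rho> * F (q - t))"
      using 1 by (simp add: kms_tridiag_def algebra_simps)
    then show ?thesis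
      unfolding edge using 1 w01 by simp
  next
    case 2
    have "w (n - 1) = F q" "w (n - 2) = F (q - t)"
      unfolding w_def q_def using n by (simp_all add: of_nat_diff field_simps)
    then show ?thesis
      using 2 edge by (simp add: kms_tridiag_def algebra_simps)
  next
    case 3
    define \<theta> where "\<theta> = (real j - (real n - 1) / 2) * t"
    have "w (j - 1) = F (\<theta> - t)" "w (j + 1) = F (\<theta> + t)" "w j = F \<theta>"
      unfolding w_def \<theta>_def using 3 by (simp_all add: of_nat_diff algebra_simps)
    then have "kms_tridiag n \<rho> w j = - \<rho> * (F (\<theta> - t) + F (\<theta> + t)) + (1 + \<rho>\<^sup>2) * F \<theta>"
      using 3 by (simp add: kms_tridiag_def algebra_simps)
    then show ?thesis
      unfolding cosh_sinh_add_diff[OF F] \<tau>_def \<open>w j = F \<theta>\<close> by (simp add: algebra_simps)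
  qed
  then show ?thesis
    unfolding w_def \<tau>_def .
qed

lemma eigenvalue_KMS_of_hyperbolic_root:
  fixes F :: "real \<Rightarrow> real" and \<rho> t :: real
  assumes n: "2 \<le> n" and \<rho>: "0 < \<rho>" "\<rho> \<noteq> 1" and t: "0 < t" and F: "F = cosh \<or> F = sinh"
    and root: "F (t * (real n + 1) / 2) = \<rho> * F (t * (real n - 1) / 2)"
  shows "eigenvalue (KMS n \<rho>) ((1 - \<rho>\<^sup>2) / (1 + \<rho>\<^sup>2 - 2 * \<rho> * cosh t))"
proof (rule tridiag_eigen_imp_eigenvalue_KMS[OF n])
  show "\<rho> \<noteq> 0" "\<rho>\<^sup>2 \<noteq> 1"
    using \<rho> by (simp_all add: power2_eq_1_iff)
  show "1 + \<rho>\<^sup>2 - 2 * \<rho> * cosh t \<noteq> 0"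
    using F root cosh_root_value(1)[of t n \<rho>] sinh_root_value(1)[OF n t, of \<rho>] t by auto
  show "\<forall>j<n. kms_tridiag n \<rho> (\<lambda>i. F ((real i - (real n - 1) / 2) * t)) j
      = (1 + \<rho>\<^sup>2 - 2 * \<rho> * cosh t) * F ((real j - (real n - 1) / 2) * t)"
    using kms_tridiag_centered_eigen[OF n F root] by blast
  have "F ((real 0 - (real n - 1) / 2) * t) \<noteq> 0"
    using F n t by auto
  then show "\<exists>j<n. F ((real j - (real n - 1) / 2) * t) \<noteq> 0"
    using n by (intro exI[of _ 0]) simp
qed

section \<open>The functions \<open>ch\<close> and \<open>sh\<close>\<close>

lemma sinh_nat_mult_gt:
  fixes x :: real
  assumes "0 < x" "2 \<le> m"
  shows "real m * sinh x < sinh (real m * x)"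
  using \<open>2 \<le> m\<close>
proof (induction m rule: nat_induct_at_least)
  case base
  have "1 < cosh x"
    using assms(1) cosh_real_ge_1[of x] cosh_real_one_iff[of x] by linarith
  then show ?case
    using assms(1) sinh_double[of x] by simp
next
  case (Suc m)
  have "real m * sinh x < sinh (real m * x) * cosh x"
    using Suc.IH mult_left_mono[OF cosh_real_ge_1[of x], of "sinh (real m * x)"] assms(1) by simp
  moreover have "sinh x \<le> cosh (real m * x) * sinh x"
    using mult_right_mono[OF cosh_real_ge_1[of "real m * x"], of "sinh x"] assms(1) by simp
  moreover have "sinh (real (Suc m) * x) = sinh (real m * x) * cosh x + cosh (real m * x) * sinh x"
    by (simp add: distrib_right sinh_add)
  ultimately show ?case
    by (simp add: distrib_right)
qed

lemma abs_sin_nat_mult_lt: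
  fixes x :: real
  assumes "0 < x" "x < pi" "2 \<le> m"
  shows "\<bar>sin (real m * x)\<bar> < real m * sin x"
  using \<open>2 \<le> m\<close>
proof (induction m rule: nat_induct_at_least)
  case base
  have "0 < sin x"
    using assms sin_gt_zero by blast
  moreover have "(cos x)\<^sup>2 < 1"
    using \<open>0 < sin x\<close> cos_squared_eq[of x] by simp
  then have "\<bar>cos x\<bar> < 1"
    by (simp add: abs_square_less_1)
  ultimately show ?case
    using sin_double[of x] by (simp add: abs_mult)
next
  case (Suc m)
  have s: "0 < sin x"
    using assms sin_gt_zero by blast
  have "sin (real (Suc m) * x) = sin (real m * x) * cos x + cos (real m * x) * sin x"
    by (simp add: distrib_right sin_add)
  then have "\<bar>sin (real (Suc m) * x)\<bar> \<le> \<bar>sin (real m * x)\<bar> * \<bar>cos x\<bar> + \<bar>cos (real m * x)\<bar> * sin x"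
    using abs_triangle_ineq[of "sin (real m * x) * cos x" "cos (real m * x) * sin x"] s
    by (simp add: abs_mult)
  also have "\<dots> \<le> \<bar>sin (real m * x)\<bar> + sin x"
    using s by (intro add_mono) (auto intro: mult_left_le mult_left_le_one_le)
  also have "\<dots> < real (Suc m) * sin x"
    using Suc.IH by (simp add: distrib_right)
  finally show ?case .
qed

lemma ch_iff: "ch n t = \<rho> \<longleftrightarrow> cosh (t * (real n + 1) / 2) = \<rho> * cosh (t * (real n - 1) / 2)"
  unfolding ch_def by (auto simp: field_simps)

lemma sh_iff:
  assumes "2 \<le> n" "t \<noteq> 0"
  shows "sh n t = \<rho> \<longleftrightarrow> sinh (t * (real n + 1) / 2) = \<rho> * sinh (t * (real n - 1) / 2)"
proof -
  have "sinh (t * (real n - 1) / 2) \<noteq> 0"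
    using assms by simp
  then show ?thesis
    unfolding sh_def using assms by (auto simp: field_simps)
qed

lemma xi_gt_1: "2 \<le> n \<Longrightarrow> 1 < xi n"
  unfolding xi_def by (simp add: field_simps)

lemma ch_strict_mono:
  assumes n: "2 \<le> n" and "0 \<le> x" "x < y"
  shows "ch n x < ch n y"
proof -
  define A where "A = (real n + 1) / 2"
  define B where "B = (real n - 1) / 2"
  have ch_AB: "ch n z = cosh (z * A) / cosh (z * B)" for z
    unfolding ch_def A_def B_def by simp
  have "cosh (x * A) / cosh (x * B) < cosh (y * A) / cosh (y * B)"
  proof (rule DERIV_pos_imp_increasing_open[OF \<open>x < y\<close>])
    fix z assume "x < z" "z < y"
    have AB: "z * A + z * B = real n * z" "z * A - z * B = z" "A - B = 1" "A + B = real n"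
      unfolding A_def B_def by (simp_all add: field_simps)
    have "A * sinh (z * A) * cosh (z * B) - B * cosh (z * A) * sinh (z * B)
        = (A * (sinh (z * A + z * B) + sinh (z * A - z * B))
           - B * (sinh (z * A + z * B) - sinh (z * A - z * B))) / 2"
      by (simp add: sinh_add sinh_diff algebra_simps)
    also have "\<dots> = ((A - B) * sinh (real n * z) + (A + B) * sinh z) / 2"
      unfolding AB(1,2) by (simp add: algebra_simps)
    also have "\<dots> = (sinh (real n * z) + real n * sinh z) / 2"
      unfolding AB(3,4) by simp
    also have "\<dots> > 0"
      using \<open>0 \<le> x\<close> \<open>x < z\<close> n by (intro divide_pos_pos add_pos_pos) simp_all
    finally show "\<exists>d. ((\<lambda>z. cosh (z * A) / cosh (z * B)) has_real_derivative d) (at z) \<and> 0 < d"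
      by (auto intro!: derivative_eq_intros exI simp: power2_eq_square algebra_simps)
  qed (intro continuous_intros; simp)
  then show ?thesis
    unfolding ch_AB .
qed

lemma xi_lt_sinh_ratio:
  assumes n: "2 \<le> n" and x: "0 < x"
  shows "xi n < sinh (x * (real n + 1) / 2) / sinh (x * (real n - 1) / 2)"
proof -
  define A where "A = (real n + 1) / 2"
  define B where "B = (real n - 1) / 2"
  have B: "0 < B" "B < A"
    unfolding A_def B_def using n by simp_all
  have "B * sinh (0 * A) - A * sinh (0 * B) < B * sinh (x * A) - A * sinh (x * B)"
  proof (rule DERIV_pos_imp_increasing_open[OF x])
    fix z :: real assume "0 < z"
    then have "A * B * cosh (z * B) < A * B * cosh (z * A)"
      using B by (simp add: cosh_real_nonneg_less_iff)
    then show "\<exists>d. ((\<lambda>z. B * sinh (z * A) - A * sinh (z * B)) has_real_derivative d) (at z) \<and> 0 < d"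
      by (auto intro!: derivative_eq_intros exI simp: algebra_simps)
  qed (intro continuous_intros)
  moreover have "0 < sinh (x * B)"
    using B x by simp
  ultimately have "A / B < sinh (x * A) / sinh (x * B)"
    using B by (simp add: field_simps)
  moreover have "xi n = A / B"
    unfolding xi_def A_def B_def using n by (simp add: field_simps)
  ultimately show ?thesis
    unfolding A_def B_def by (simp add: field_simps)
qed

lemma sh_strict_mono:
  assumes n: "2 \<le> n" and "0 \<le> x" "x < y"
  shows "sh n x < sh n y"
proof (cases "x = 0")
  case True
  then show ?thesis
    using xi_lt_sinh_ratio[OF n, of y] \<open>x < y\<close> unfolding sh_def xi_def by simp
next
  case False
  define A where "A = (real n + 1) / 2"
  define B where "B = (real n - 1) / 2"
  have B: "0 < B"
    unfolding B_def using n by simp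
  have "sinh (x * A) / sinh (x * B) < sinh (y * A) / sinh (y * B)"
  proof (rule DERIV_pos_imp_increasing_open[OF \<open>x < y\<close>])
    fix z assume "x < z" "z < y"
    then have z: "0 < z"
      using \<open>0 \<le> x\<close> by simp
    have AB: "z * A + z * B = real n * z" "z * A - z * B = z" "A - B = 1" "A + B = real n"
      unfolding A_def B_def by (simp_all add: field_simps)
    have "A * cosh (z * A) * sinh (z * B) - B * sinh (z * A) * cosh (z * B)
        = (A * (sinh (z * A + z * B) - sinh (z * A - z * B))
           - B * (sinh (z * A + z * B) + sinh (z * A - z * B))) / 2"
      by (simp add: sinh_add sinh_diff algebra_simps)
    also have "\<dots> = ((A - B) * sinh (real n * z) - (A + B) * sinh z) / 2"
      unfolding AB(1,2) by (simp add: algebra_simps)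
    also have "\<dots> = (sinh (real n * z) - real n * sinh z) / 2"
      unfolding AB(3,4) by simp
    also have "\<dots> > 0"
      using sinh_nat_mult_gt[OF z n] by simp
    finally show "\<exists>d. ((\<lambda>z. sinh (z * A) / sinh (z * B)) has_real_derivative d) (at z) \<and> 0 < d"
      using z B by (auto intro!: derivative_eq_intros exI simp: power2_eq_square algebra_simps)
  qed (use \<open>0 \<le> x\<close> False B in \<open>intro continuous_intros; auto\<close>)
  then show ?thesis
    using False \<open>0 \<le> x\<close> \<open>x < y\<close> unfolding sh_def A_def B_def by (simp add: field_simps)
qed

lemma ch_inj: "2 \<le> n \<Longrightarrow> 0 \<le> x \<Longrightarrow> 0 \<le> y \<Longrightarrow> ch n x = ch n y \<Longrightarrow> x = y"
  by (metis ch_strict_mono linorder_neq_iff order_less_irrefl)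

lemma sh_inj: "2 \<le> n \<Longrightarrow> 0 \<le> x \<Longrightarrow> 0 \<le> y \<Longrightarrow> sh n x = sh n y \<Longrightarrow> x = y"
  by (metis sh_strict_mono linorder_neq_iff order_less_irrefl)

lemma ch_root_exists:
  assumes n: "2 \<le> n" and \<rho>: "1 \<le> \<rho>"
  obtains x where "0 \<le> x" "ch n x = \<rho>"
proof -
  define A where "A = (real n + 1) / 2"
  define B where "B = (real n - 1) / 2"
  define X where "X = arcosh \<rho>"
  have X: "0 \<le> X" "cosh X = \<rho>"
    unfolding X_def using \<rho> by auto
  define g where "g z = cosh (z * A) - \<rho> * cosh (z * B)" for z
  have "g 0 \<le> 0"
    unfolding g_def using \<rho> by simp
  moreover have "0 \<le> g X"
  proof -
    have XA: "X * A = X * B + X"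
      unfolding A_def B_def by (simp add: field_simps)
    have "0 \<le> sinh (X * B) * sinh X"
      using X n unfolding B_def by simp
    then show ?thesis
      unfolding g_def XA cosh_add X(2) by (simp add: algebra_simps)
  qed
  moreover have "continuous_on {0..X} g"
    unfolding g_def by (intro continuous_intros)
  ultimately obtain x where "0 \<le> x" "g x = 0"
    using IVT'[of g 0 0 X] X(1) by auto
  then show ?thesis
    using that unfolding g_def ch_iff A_def B_def by simp
qed

lemma DERIV_neg_dec_right_le:
  fixes g :: "real \<Rightarrow> real"
  assumes "(g has_real_derivative l) (at x)" "l < 0" "0 < X"
  obtains h where "0 < h" "h \<le> X" "g (x + h) < g x"
proof -
  obtain d where "0 < d" "\<And>h. 0 < h \<Longrightarrow> h < d \<Longrightarrow> g (x + h) < g x"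
    using DERIV_neg_dec_right[OF assms(1,2)] by blast
  then show ?thesis
    using that[of "min (d / 2) X"] assms(3) by simp
qed

lemma sh_root_exists:
  assumes n: "2 \<le> n" and \<rho>: "xi n \<le> \<rho>"
  obtains x where "0 \<le> x" "sh n x = \<rho>"
proof (cases "\<rho> = xi n")
  case True
  then show ?thesis
    using that[of 0] unfolding sh_def xi_def by simp
next
  case False
  define A where "A = (real n + 1) / 2"
  define B where "B = (real n - 1) / 2"
  have B: "0 < B" and "xi n = A / B"
    unfolding xi_def A_def B_def using n by (simp_all add: field_simps)
  with False \<rho> have slope: "A - \<rho> * B < 0"
    by (simp add: field_simps)
  define X where "X = arcosh \<rho>"
  have X: "0 < X" "cosh X = \<rho>"
    unfolding X_def using \<rho> False xi_gt_1[OF n] by auto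
  define g where "g z = sinh (z * A) - \<rho> * sinh (z * B)" for z
  have "(g has_real_derivative (A - \<rho> * B)) (at 0)"
    unfolding g_def by (auto intro!: derivative_eq_intros)
  then obtain h where h: "0 < h" "h \<le> X" "g (0 + h) < g 0"
    by (rule DERIV_neg_dec_right_le[OF _ slope X(1)])
  then have "g h \<le> 0"
    unfolding g_def by simp
  have XA: "X * A = X * B + X"
    unfolding A_def B_def by (simp add: field_simps)
  have "0 \<le> cosh (X * B) * sinh X"
    using X by simp
  then have "0 \<le> g X"
    unfolding g_def XA sinh_add X(2) by (simp add: algebra_simps)
  moreover have "continuous_on {h..X} g"
    unfolding g_def by (intro continuous_intros)
  ultimately obtain x where "h \<le> x" "g x = 0"
    using IVT'[of g h 0 X] h \<open>g h \<le> 0\<close> by auto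
  moreover have "x \<noteq> 0"
    using \<open>h \<le> x\<close> h by simp
  ultimately show ?thesis
    using that[of x] h unfolding g_def A_def B_def sh_iff[OF n \<open>x \<noteq> 0\<close>] by simp
qed

lemma mu_0_hyperbolic:
  assumes n: "2 \<le> n" and \<rho>: "1 \<le> \<rho>"
  obtains x where "0 \<le> x" "ch n x = \<rho>" "mu n \<rho> 0 = \<i> * complex_of_real x"
proof -
  obtain x where x: "0 \<le> x" "ch n x = \<rho>"
    using ch_root_exists[OF n \<rho>] .
  then have "(THE x. 0 \<le> x \<and> ch n x = \<rho>) = x"
    using ch_inj[OF n] by blast
  then show ?thesis
    using that x \<rho> unfolding mu_def by simp
qed

lemma mu_1_hyperbolic:
  assumes n: "2 \<le> n" and \<rho>: "xi n \<le> \<rho>"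
  obtains x where "0 \<le> x" "sh n x = \<rho>" "mu n \<rho> 1 = \<i> * complex_of_real x"
proof -
  obtain x where x: "0 \<le> x" "sh n x = \<rho>"
    using sh_root_exists[OF n \<rho>] .
  then have "(THE x. 0 \<le> x \<and> sh n x = \<rho>) = x"
    using sh_inj[OF n] by blast
  then show ?thesis
    using that x \<rho> unfolding mu_def by simp
qed

lemma lam_imaginary_mu:
  assumes "mu n \<rho> k = \<i> * complex_of_real x"
  shows "lam n \<rho> k = (-1) ^ k * (if x = 0 then real n else sinh (real n * x) / sinh x)"
proof (cases "x = 0")
  case True
  then show ?thesis
    unfolding lam_def assms dirichlet_ratio_def by simp
next
  case False
  have "sin (\<i> * complex_of_real y) = \<i> * complex_of_real (sinh y)" for y
    by (simp add: sin_i_times exp_of_real sinh_field_def exp_minus)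
  from this[of x] this[of "real n * x"]
  have "dirichlet_ratio n (\<i> * complex_of_real x) = complex_of_real (sinh (real n * x) / sinh x)"
    unfolding dirichlet_ratio_def using False by (simp add: mult.left_commute)
  then show ?thesis
    unfolding lam_def assms using False by simp
qed

lemma lam_0_hyperbolic:
  assumes n: "2 \<le> n" and \<rho>: "1 < \<rho>"
  obtains x where "0 < x" "ch n x = \<rho>" "lam n \<rho> 0 = (1 - \<rho>\<^sup>2) / (1 + \<rho>\<^sup>2 - 2 * \<rho> * cosh x)"
    and "real n < lam n \<rho> 0"
proof -
  obtain x where x: "0 \<le> x" "ch n x = \<rho>" "mu n \<rho> 0 = \<i> * complex_of_real x"
    using mu_0_hyperbolic[OF n less_imp_le[OF \<rho>]] by auto
  have "x \<noteq> 0"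
    using x(2) \<rho> unfolding ch_def by auto
  then have pos: "0 < x" and lam: "lam n \<rho> 0 = sinh (real n * x) / sinh x"
    using x(1) lam_imaginary_mu[OF x(3)] by simp_all
  show ?thesis
  proof (rule that[OF pos x(2)])
    show "lam n \<rho> 0 = (1 - \<rho>\<^sup>2) / (1 + \<rho>\<^sup>2 - 2 * \<rho> * cosh x)"
      unfolding lam cosh_root_value(2)[OF \<open>x \<noteq> 0\<close> x(2)[unfolded ch_iff]] ..
    show "real n < lam n \<rho> 0"
      unfolding lam using sinh_nat_mult_gt[OF pos n] pos by (simp add: field_simps)
  qed
qed

lemma lam_1_hyperbolic:
  assumes n: "2 \<le> n" and \<rho>: "xi n < \<rho>"
  obtains x where "0 < x" "sh n x = \<rho>" "lam n \<rho> 1 = (1 - \<rho>\<^sup>2) / (1 + \<rho>\<^sup>2 - 2 * \<rho> * cosh x)"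
    and "lam n \<rho> 1 < - real n"
proof -
  obtain x where x: "0 \<le> x" "sh n x = \<rho>" "mu n \<rho> 1 = \<i> * complex_of_real x"
    using mu_1_hyperbolic[OF n less_imp_le[OF \<rho>]] by auto
  have "x \<noteq> 0"
    using x(2) \<rho> unfolding sh_def xi_def by auto
  then have pos: "0 < x" and lam: "lam n \<rho> 1 = - (sinh (real n * x) / sinh x)"
    using x(1) lam_imaginary_mu[OF x(3)] by simp_all
  show ?thesis
  proof (rule that[OF pos x(2)])
    show "lam n \<rho> 1 = (1 - \<rho>\<^sup>2) / (1 + \<rho>\<^sup>2 - 2 * \<rho> * cosh x)"
      unfolding lam sinh_root_value(2)[OF n pos x(2)[unfolded sh_iff[OF n \<open>x \<noteq> 0\<close>]]] ..
    show "lam n \<rho> 1 < - real n"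
      unfolding lam using sinh_nat_mult_gt[OF pos n] pos by (simp add: field_simps)
  qed
qed

section \<open>The trigonometric parameters \<open>\<mu>\<^sub>k\<close>\<close>

text \<open>
  The phase shift \<open>k\<pi>/2\<close> makes these \<open>(-1) ^ (k div 2)\<close> times the cosines for even \<open>k\<close> and the
  sines for odd \<open>k\<close>, so \<open>secular_root\<close> covers both \<open>ct_root\<close> and \<open>st_root\<close>.
\<close>

definition secular_num :: "nat \<Rightarrow> nat \<Rightarrow> real \<Rightarrow> real" where
  "secular_num n k \<mu> = cos (\<mu> * (real n + 1) / 2 - real k * pi / 2)"

definition secular_den :: "nat \<Rightarrow> nat \<Rightarrow> real \<Rightarrow> real" where
  "secular_den n k \<mu> = cos (\<mu> * (real n - 1) / 2 - real k * pi / 2)"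

definition secular_root :: "nat \<Rightarrow> real \<Rightarrow> nat \<Rightarrow> real \<Rightarrow> bool" where
  "secular_root n \<rho> k \<mu> \<longleftrightarrow> secular_den n k \<mu> \<noteq> 0 \<and> secular_num n k \<mu> = \<rho> * secular_den n k \<mu>"

lemma cos_minus_half_pi_mult:
  "cos (y - real k * pi / 2) = (-1) ^ (k div 2) * (if even k then cos y else sin y)"
proof (cases "even k")
  case True
  then obtain m where "k = 2 * m"
    by blast
  then show ?thesis
    by (simp add: cos_diff)
next
  case False
  then obtain m where m: "k = 2 * m + 1"
    using oddE by blast
  have "y - real k * pi / 2 = (y - real m * pi) - pi / 2"
    unfolding m by (simp add: field_simps)
  then have "cos (y - real k * pi / 2) = sin (y - real m * pi)"
    by (simp only: cos_diff[of "y - real m * pi" "pi / 2"]) simp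
  then show ?thesis
    using m by (simp add: sin_diff)
qed

lemma ct_root_iff_secular_root:
  assumes "even k"
  shows "ct_root n \<rho> \<mu> \<longleftrightarrow> secular_root n \<rho> k \<mu>"
proof -
  have "secular_num n k \<mu> = (-1) ^ (k div 2) * cos (\<mu> * (real n + 1) / 2)"
    "secular_den n k \<mu> = (-1) ^ (k div 2) * cos (\<mu> * (real n - 1) / 2)"
    unfolding secular_num_def secular_den_def cos_minus_half_pi_mult using assms by simp_all
  then show ?thesis
    unfolding ct_root_def secular_root_def ct_def by (auto simp: field_simps)
qed

lemma st_root_iff_secular_root:
  assumes "odd k" "\<mu> \<noteq> 0"
  shows "st_root n \<rho> \<mu> \<longleftrightarrow> secular_root n \<rho> k \<mu>"
proof -
  have "secular_num n k \<mu> = (-1) ^ (k div 2) * sin (\<mu> * (real n + 1) / 2)"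
    "secular_den n k \<mu> = (-1) ^ (k div 2) * sin (\<mu> * (real n - 1) / 2)"
    unfolding secular_num_def secular_den_def cos_minus_half_pi_mult using assms by simp_all
  then show ?thesis
    unfolding st_root_def secular_root_def st_def using assms by (auto simp: field_simps)
qed

lemma alpha_lt_beta: "2 \<le> n \<Longrightarrow> k < n \<Longrightarrow> alpha n k < beta n k"
  unfolding alpha_def beta_def by (simp add: field_simps)

lemma beta_lt_gamma: "2 \<le> n \<Longrightarrow> k < n \<Longrightarrow> beta n k < gamma n k"
  unfolding beta_def gamma_def by (simp add: field_simps)

lemma gamma_lt_beta_Suc: "2 \<le> n \<Longrightarrow> gamma n k < beta n (k + 1)"
  unfolding beta_def gamma_def using pi_gt_zero by (simp add: field_simps) (simp add: add_pos_nonneg)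

lemma beta_lt_alpha_Suc: "2 \<le> n \<Longrightarrow> 1 \<le> k \<Longrightarrow> beta n k < alpha n (k + 1)"
  unfolding alpha_def beta_def by (simp add: field_simps)

lemma gamma_lt_pi: "k < n \<Longrightarrow> gamma n k < pi"
  unfolding gamma_def by (simp add: field_simps)

lemma beta_lt_pi: "k < n \<Longrightarrow> beta n k < pi"
  unfolding beta_def by (simp add: field_simps)

lemma alpha_nonneg: "2 \<le> n \<Longrightarrow> 1 \<le> k \<Longrightarrow> 0 \<le> alpha n k"
  unfolding alpha_def by simp

lemma secular_den_pos:
  assumes n: "2 \<le> n" and "k < n" and \<mu>: "alpha n k < \<mu>" "\<mu> \<le> gamma n k"
  shows "0 < secular_den n k \<mu>"
proof -
  have n1: "0 < real n - 1"
    using n by simp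
  have "(real k - 1) * pi < \<mu> * (real n - 1)"
    using \<mu>(1) n1 unfolding alpha_def by (simp add: pos_divide_less_eq)
  moreover have "\<mu> * (real n - 1) < (real k + 1) * pi"
  proof (cases "0 < \<mu>")
    case True
    then have "\<mu> * (real n - 1) < \<mu> * (real n + 1)"
      by simp
    also have "\<dots> \<le> (real k + 1) * pi"
      using \<mu>(2) unfolding gamma_def by (simp add: pos_le_divide_eq)
    finally show ?thesis .
  next
    case False
    then show ?thesis
      using n1 by (smt (verit) mult_nonpos_nonneg of_nat_0_le_iff pi_gt_zero mult_pos_pos)
  qed
  ultimately show ?thesis
    unfolding secular_den_def by (intro cos_gt_zero_pi) (simp_all add: field_simps)
qed

lemma secular_slope_numerator_pos:
  fixes z :: real
  assumes n: "2 \<le> n" and z: "0 < z" "z < pi"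
  shows "0 < (real n + 1) / 2 * (sin (z * (real n + 1) / 2 - real k * pi / 2) * cos (z * (real n - 1) / 2 - real k * pi / 2))
           - (real n - 1) / 2 * (cos (z * (real n + 1) / 2 - real k * pi / 2) * sin (z * (real n - 1) / 2 - real k * pi / 2))"
    (is "0 < ?N")
proof -
  define A where "A = z * (real n + 1) / 2 - real k * pi / 2"
  define B where "B = z * (real n - 1) / 2 - real k * pi / 2"
  have AB: "A + B = real n * z - real k * pi" "A - B = z"
    unfolding A_def B_def by (simp_all add: field_simps)
  have "?N = ((real n + 1) / 2 * (sin (A + B) + sin (A - B)) - (real n - 1) / 2 * (sin (A + B) - sin (A - B))) / 2"
    unfolding A_def[symmetric] B_def[symmetric] by (simp add: sin_add sin_diff algebra_simps)
  also have "\<dots> = ((-1) ^ k * sin (real n * z) + real n * sin z) / 2"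
    unfolding AB by (simp add: sin_diff field_simps)
  also have "\<dots> > 0"
  proof -
    have "- \<bar>sin (real n * z)\<bar> \<le> (-1) ^ k * sin (real n * z)"
      by (cases "even k") auto
    then show ?thesis
      using abs_sin_nat_mult_lt[OF z n] by simp
  qed
  finally show ?thesis .
qed

lemma secular_ratio_strict_antimono:
  assumes n: "2 \<le> n" and k: "k < n"
    and \<mu>: "alpha n k < \<mu>1" "0 \<le> \<mu>1" "\<mu>1 < \<mu>2" "\<mu>2 \<le> gamma n k"
  shows "secular_num n k \<mu>2 / secular_den n k \<mu>2 < secular_num n k \<mu>1 / secular_den n k \<mu>1"
proof -
  define A where "A z = z * (real n + 1) / 2 - real k * pi / 2" for z
  define B where "B z = z * (real n - 1) / 2 - real k * pi / 2" for z
  have num_den: "secular_num n k z = cos (A z)" "secular_den n k z = cos (B z)" for z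
    unfolding secular_num_def secular_den_def A_def B_def by simp_all
  have den: "cos (B z) \<noteq> 0" if "\<mu>1 \<le> z" "z \<le> \<mu>2" for z
    using secular_den_pos[OF n k, of z] that \<mu> unfolding num_den by simp
  have "- (cos (A \<mu>1) / cos (B \<mu>1)) < - (cos (A \<mu>2) / cos (B \<mu>2))"
  proof (rule DERIV_pos_imp_increasing_open[OF \<mu>(3)])
    fix z assume z: "\<mu>1 < z" "z < \<mu>2"
    then have "0 < z" "z < pi"
      using \<mu> gamma_lt_pi[OF k] by linarith+
    define N where "N = (real n + 1) / 2 * (sin (A z) * cos (B z)) - (real n - 1) / 2 * (cos (A z) * sin (B z))"
    have "0 < N"
      using secular_slope_numerator_pos[OF n \<open>0 < z\<close> \<open>z < pi\<close>, of k] unfolding N_def A_def B_def .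
    then have "0 < N / (cos (B z))\<^sup>2"
      using den[of z] z by simp
    moreover have "((\<lambda>z. - (cos (A z) / cos (B z))) has_real_derivative N / (cos (B z))\<^sup>2) (at z)"
      using den[of z] z unfolding N_def A_def B_def
      by (auto intro!: derivative_eq_intros simp: power2_eq_square field_simps)
    ultimately show "\<exists>d. ((\<lambda>z. - (cos (A z) / cos (B z))) has_real_derivative d) (at z) \<and> 0 < d"
      by blast
  qed (use den in \<open>unfold A_def B_def, intro continuous_intros; auto\<close>)
  then show ?thesis
    unfolding num_den by simp
qed

lemma secular_root_unique:
  assumes n: "2 \<le> n" and k: "k < n"
    and \<mu>1: "alpha n k < \<mu>1" "0 \<le> \<mu>1" "\<mu>1 \<le> gamma n k" "secular_root n \<rho> k \<mu>1"
    and \<mu>2: "alpha n k < \<mu>2" "0 \<le> \<mu>2" "\<mu>2 \<le> gamma n k" "secular_root n \<rho> k \<mu>2"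
  shows "\<mu>1 = \<mu>2"
proof -
  have "secular_num n k \<mu>1 / secular_den n k \<mu>1 = secular_num n k \<mu>2 / secular_den n k \<mu>2"
    using \<mu>1(4) \<mu>2(4) unfolding secular_root_def by simp
  then show ?thesis
    using secular_ratio_strict_antimono[OF n k, of \<mu>1 \<mu>2] secular_ratio_strict_antimono[OF n k, of \<mu>2 \<mu>1]
      \<mu>1 \<mu>2 by (metis linorder_neq_iff order_less_irrefl)
qed

lemma secular_at_beta:
  assumes n: "2 \<le> n" and k: "k < n"
  shows "secular_num n k (beta n k) = cos (real k * pi / (2 * real n))"
    and "secular_den n k (beta n k) = cos (real k * pi / (2 * real n))"
    and "0 < cos (real k * pi / (2 * real n))"
proof -
  have "beta n k * (real n + 1) / 2 - real k * pi / 2 = real k * pi / (2 * real n)"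
    "beta n k * (real n - 1) / 2 - real k * pi / 2 = - (real k * pi / (2 * real n))"
    unfolding beta_def using n by (simp_all add: field_simps)
  then show "secular_num n k (beta n k) = cos (real k * pi / (2 * real n))"
    "secular_den n k (beta n k) = cos (real k * pi / (2 * real n))"
    unfolding secular_num_def secular_den_def by simp_all
  have "0 \<le> real k * pi / (2 * real n)" "real k * pi / (2 * real n) < pi / 2"
    using k by (simp_all add: field_simps)
  then show "0 < cos (real k * pi / (2 * real n))"
    by (intro cos_gt_zero_pi) linarith+
qed

lemma secular_num_gamma: "secular_num n k (gamma n k) = 0"
proof -
  have "gamma n k * (real n + 1) / 2 - real k * pi / 2 = pi / 2"
    unfolding gamma_def by (simp add: field_simps)
  then show ?thesis
    unfolding secular_num_def by (simp only:) simp
qed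

lemma secular_at_alpha:
  assumes n: "2 \<le> n" and k: "2 \<le> k" "k < n"
  shows "secular_den n k (alpha n k) = 0" and "0 < secular_num n k (alpha n k)"
proof -
  have "alpha n k * (real n - 1) / 2 - real k * pi / 2 = - (pi / 2)"
    unfolding alpha_def using n by (simp add: field_simps)
  then show "secular_den n k (alpha n k) = 0"
    unfolding secular_den_def by simp
  define y where "y = (real k - 1) * pi / (real n - 1)"
  have "alpha n k * (real n + 1) / 2 - real k * pi / 2 = y - pi / 2"
    unfolding alpha_def y_def using n by (simp add: field_simps)
  moreover have "0 < y" "y < pi"
    unfolding y_def using k n by (simp_all add: field_simps)
  ultimately show "0 < secular_num n k (alpha n k)"
    unfolding secular_num_def by (simp add: cos_diff sin_gt_zero)
qed

lemma secular_root_exists_between: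
  fixes n k :: nat and \<rho> a b :: real
  defines "g \<equiv> \<lambda>z. secular_num n k z - \<rho> * secular_den n k z"
  assumes n: "2 \<le> n" and k: "k < n"
    and ab: "alpha n k \<le> a" "a \<le> b" "b \<le> gamma n k"
    and sign: "0 \<le> g a" "g b \<le> 0" and a: "alpha n k < a \<or> 0 < g a"
  shows "\<exists>\<mu>. a \<le> \<mu> \<and> \<mu> \<le> b \<and> alpha n k < \<mu> \<and> secular_root n \<rho> k \<mu>"
proof -
  have "continuous_on {a..b} g"
    unfolding g_def secular_num_def secular_den_def by (intro continuous_intros) auto
  then obtain \<mu> where \<mu>: "a \<le> \<mu>" "\<mu> \<le> b" "g \<mu> = 0"
    using IVT2'[of g b 0 a] sign ab(2) by auto
  moreover have "alpha n k < \<mu>"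
    using \<mu> ab a by (cases "\<mu> = a") auto
  moreover have "0 < secular_den n k \<mu>"
    using secular_den_pos[OF n k] \<open>alpha n k < \<mu>\<close> \<mu>(2) ab(3) by simp
  ultimately show ?thesis
    unfolding g_def secular_root_def by auto
qed

lemma secular_root_exists_lt_one:
  assumes n: "2 \<le> n" and k: "k < n" and \<rho>: "0 \<le> \<rho>" "\<rho> \<le> 1"
  shows "\<exists>\<mu>. beta n k \<le> \<mu> \<and> \<mu> \<le> gamma n k \<and> secular_root n \<rho> k \<mu>"
proof -
  note order = alpha_lt_beta[OF n k] beta_lt_gamma[OF n k]
  have "0 \<le> secular_num n k (beta n k) - \<rho> * secular_den n k (beta n k)"
    using secular_at_beta[OF n k] \<rho> by (simp add: mult_le_cancel_right1)
  moreover have "secular_num n k (gamma n k) - \<rho> * secular_den n k (gamma n k) \<le> 0"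
    using secular_num_gamma secular_den_pos[OF n k, of "gamma n k"] order \<rho> by simp
  ultimately show ?thesis
    using secular_root_exists_between[OF n k, of "beta n k" "gamma n k" \<rho>] order by auto
qed

lemma secular_root_exists_ge_one:
  assumes n: "2 \<le> n" and k: "2 \<le> k" "k < n" and \<rho>: "1 \<le> \<rho>"
  shows "\<exists>\<mu>. alpha n k < \<mu> \<and> \<mu> \<le> beta n k \<and> secular_root n \<rho> k \<mu>"
proof -
  note order = alpha_lt_beta[OF n k(2)] beta_lt_gamma[OF n k(2)]
  have "0 < secular_num n k (alpha n k) - \<rho> * secular_den n k (alpha n k)"
    using secular_at_alpha[OF n k] by simp
  moreover have "secular_num n k (beta n k) - \<rho> * secular_den n k (beta n k) \<le> 0"
    using secular_at_beta[OF n k(2)] \<rho> by (simp add: mult_le_cancel_right1)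
  ultimately show ?thesis
    using secular_root_exists_between[OF n k(2), of "alpha n k" "beta n k" \<rho>] order by auto
qed

lemma secular_root_exists_one:
  assumes n: "2 \<le> n" and \<rho>: "1 \<le> \<rho>" "\<rho> < xi n"
  shows "\<exists>\<mu>. 0 < \<mu> \<and> \<mu> \<le> beta n 1 \<and> secular_root n \<rho> 1 \<mu>"
proof -
  define g where "g z = secular_num n 1 z - \<rho> * secular_den n 1 z" for z
  have slope: "- ((real n + 1) / 2 - \<rho> * ((real n - 1) / 2)) < 0"
    using \<rho>(2) n unfolding xi_def by (simp add: field_simps)
  have "((\<lambda>z. - g z) has_real_derivative - ((real n + 1) / 2 - \<rho> * ((real n - 1) / 2))) (at 0)"
    unfolding g_def secular_num_def secular_den_def
    by (auto intro!: derivative_eq_intros simp: field_simps)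
  moreover have "0 < beta n 1"
    unfolding beta_def using n by simp
  ultimately obtain h where "0 < h" "h \<le> beta n 1" "- g (0 + h) < - g 0"
    by (rule DERIV_neg_dec_right_le[OF _ slope])
  then have h: "0 < h" "h \<le> beta n 1" "g 0 < g h"
    by simp_all
  moreover have "g 0 = 0" "alpha n 1 = 0" "beta n 1 \<le> gamma n 1"
    unfolding g_def secular_num_def secular_den_def alpha_def
    using beta_lt_gamma[of n 1] n by simp_all
  moreover have "g (beta n 1) \<le> 0"
    using secular_at_beta[of n 1] n \<rho> unfolding g_def by (simp add: mult_le_cancel_right1)
  ultimately obtain \<mu> where "h \<le> \<mu>" "\<mu> \<le> beta n 1" "secular_root n \<rho> 1 \<mu>"
    using secular_root_exists_between[of n 1 h "beta n 1" \<rho>] n unfolding g_def by auto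
  moreover have "0 < \<mu>"
    using \<open>h \<le> \<mu>\<close> h by simp
  ultimately show ?thesis
    by blast
qed

lemma the_secular_root:
  assumes n: "2 \<le> n" and k: "k < n"
    and iff: "\<And>m. P m \<longleftrightarrow> Q m \<and> secular_root n \<rho> k m"
    and Q: "\<And>m. Q m \<Longrightarrow> alpha n k < m \<and> 0 \<le> m \<and> m \<le> gamma n k"
    and \<mu>: "Q \<mu>" "secular_root n \<rho> k \<mu>"
  shows "(THE m. P m) = \<mu>"
proof (rule the_equality)
  show "P \<mu>"
    using iff \<mu> by blast
  show "m = \<mu>" if "P m" for m
    using secular_root_unique[OF n k] Q[of m] Q[OF \<mu>(1)] \<mu>(2) iff[of m] that by blast
qed

lemma mu_lt_one:
  assumes n: "2 \<le> n" and k: "k < n" and \<rho>: "0 \<le> \<rho>" "\<rho> < 1"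
  obtains \<mu> where "mu n \<rho> k = complex_of_real \<mu>" "beta n k \<le> \<mu>" "\<mu> \<le> gamma n k" "0 < \<mu>"
    and "secular_root n \<rho> k \<mu>"
proof -
  define root where "root m = (if even k then ct_root n \<rho> m else st_root n \<rho> m)" for m
  have "beta n 0 = 0"
    unfolding beta_def by simp
  then have mu_eq: "mu n \<rho> k = complex_of_real (THE m. beta n k \<le> m \<and> m \<le> gamma n k \<and> root m)"
    using \<rho> xi_gt_1[OF n] unfolding mu_def root_def by (cases "k = 0"; cases "k = 1") auto
  have root: "root m \<longleftrightarrow> secular_root n \<rho> k m" if "beta n k \<le> m" for m
  proof (cases "even k")
    case False
    then have "0 < beta n k"
      unfolding beta_def using n by (cases k) auto
    then show ?thesis
      using that False st_root_iff_secular_root[of k m] unfolding root_def by simp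
  qed (simp add: root_def ct_root_iff_secular_root)
  obtain \<mu> where \<mu>: "beta n k \<le> \<mu>" "\<mu> \<le> gamma n k" "secular_root n \<rho> k \<mu>"
    using secular_root_exists_lt_one[OF n k \<rho>(1)] \<rho>(2) by auto
  have beta_nonneg: "0 \<le> beta n k"
    unfolding beta_def by simp
  then have "(THE m. beta n k \<le> m \<and> m \<le> gamma n k \<and> root m) = \<mu>"
    using alpha_lt_beta[OF n k] \<mu> root
    by (intro the_secular_root[OF n k, where Q = "\<lambda>m. beta n k \<le> m \<and> m \<le> gamma n k"]) auto
  moreover have "0 < \<mu>"
  proof (rule ccontr)
    assume "\<not> 0 < \<mu>"
    then have "\<mu> = 0" "beta n k = 0"
      using \<mu>(1) beta_nonneg by simp_all
    then have "\<mu> = 0" "k = 0"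
      using n unfolding beta_def by simp_all
    then show False
      using \<mu>(3) \<rho>(2) unfolding secular_root_def secular_num_def secular_den_def by simp
  qed
  ultimately show ?thesis
    using that \<mu> mu_eq by simp
qed

lemma mu_ge_one:
  assumes n: "2 \<le> n" and k: "2 \<le> k" "k < n" and \<rho>: "1 \<le> \<rho>"
  obtains \<mu> where "mu n \<rho> k = complex_of_real \<mu>" "alpha n k < \<mu>" "\<mu> \<le> beta n k"
    and "secular_root n \<rho> k \<mu>"
proof -
  define root where "root m = (if even k then ct_root n \<rho> m else st_root n \<rho> m)" for m
  have mu_eq: "mu n \<rho> k = complex_of_real (THE m. alpha n k < m \<and> m \<le> beta n k \<and> root m)"
    using \<rho> k unfolding mu_def root_def by auto
  have "0 \<le> alpha n k"
    using alpha_nonneg[OF n] k by simp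
  then have root: "root m \<longleftrightarrow> secular_root n \<rho> k m" if "alpha n k < m" for m
    using that ct_root_iff_secular_root[of k] st_root_iff_secular_root[of k m] unfolding root_def
    by auto
  obtain \<mu> where \<mu>: "alpha n k < \<mu>" "\<mu> \<le> beta n k" "secular_root n \<rho> k \<mu>"
    using secular_root_exists_ge_one[OF n k \<rho>] by auto
  have "(THE m. alpha n k < m \<and> m \<le> beta n k \<and> root m) = \<mu>"
    using beta_lt_gamma[OF n k(2)] \<open>0 \<le> alpha n k\<close> \<mu> root
    by (intro the_secular_root[OF n k(2), where Q = "\<lambda>m. alpha n k < m \<and> m \<le> beta n k"]) auto
  then show ?thesis
    using that \<mu> mu_eq by simp
qed

lemma mu_1_real:
  assumes n: "2 \<le> n" and \<rho>: "1 \<le> \<rho>" "\<rho> < xi n"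
  obtains \<mu> where "mu n \<rho> 1 = complex_of_real \<mu>" "0 < \<mu>" "\<mu> \<le> beta n 1"
    and "secular_root n \<rho> 1 \<mu>"
proof -
  have mu_eq: "mu n \<rho> 1 = complex_of_real (THE m. 0 \<le> m \<and> m \<le> beta n 1 \<and> st_root n \<rho> m)"
    using \<rho> unfolding mu_def by auto
  have root: "0 \<le> m \<and> m \<le> beta n 1 \<and> st_root n \<rho> m \<longleftrightarrow> (0 < m \<and> m \<le> beta n 1) \<and> secular_root n \<rho> 1 m" for m
    using \<rho>(2) st_root_iff_secular_root[of 1 m n \<rho>]
    unfolding st_root_def st_def xi_def by (cases "m = 0") auto
  obtain \<mu> where \<mu>: "0 < \<mu>" "\<mu> \<le> beta n 1" "secular_root n \<rho> 1 \<mu>"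
    using secular_root_exists_one[OF n \<rho>] by auto
  have "(THE m. 0 \<le> m \<and> m \<le> beta n 1 \<and> st_root n \<rho> m) = \<mu>"
    using beta_lt_gamma[of n 1] n \<mu> alpha_def[of n 1]
    by (intro the_secular_root[OF n _ root]) auto
  then show ?thesis
    using that \<mu> mu_eq by simp
qed

lemma lam_eq_sigma:
  assumes n: "2 \<le> n" and \<mu>: "0 < \<mu>" "\<mu> < pi" and root: "secular_root n \<rho> k \<mu>"
    and mu: "mu n \<rho> k = complex_of_real \<mu>"
  shows "lam n \<rho> k = sigma \<rho> \<mu>"
proof -
  define A where "A = \<mu> * (real n + 1) / 2 - real k * pi / 2"
  define B where "B = \<mu> * (real n - 1) / 2 - real k * pi / 2"
  have AB: "A + B = real n * \<mu> - real k * pi" "A - B = \<mu>"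
    unfolding A_def B_def by (simp_all add: field_simps)
  have root': "cos A = \<rho> * cos B" and "cos B \<noteq> 0"
    using root unfolding secular_root_def secular_num_def secular_den_def A_def B_def by auto
  have "0 < sin \<mu>"
    using \<mu> sin_gt_zero by blast
  have den: "(1 - 2 * \<rho> * cos \<mu> + \<rho>\<^sup>2) * (cos B)\<^sup>2 = (sin \<mu>)\<^sup>2"
    using cos_law[where A = A and B = B] unfolding AB root' by (simp add: power2_eq_square algebra_simps)
  have num: "(1 - \<rho>\<^sup>2) * (cos B)\<^sup>2 = (-1) ^ k * sin (real n * \<mu>) * sin \<mu>"
    using cos_squared_diff[where A = A and B = B] unfolding AB root'
    by (simp add: sin_diff power2_eq_square algebra_simps)
  have "sigma \<rho> \<mu> = ((1 - \<rho>\<^sup>2) * (cos B)\<^sup>2) / ((1 - 2 * \<rho> * cos \<mu> + \<rho>\<^sup>2) * (cos B)\<^sup>2)"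
    unfolding sigma_def using \<open>cos B \<noteq> 0\<close> by simp
  also have "\<dots> = (-1) ^ k * (sin (real n * \<mu>) / sin \<mu>)"
    unfolding den num using \<open>0 < sin \<mu>\<close> by (simp add: power2_eq_square)
  also have "\<dots> = lam n \<rho> k"
  proof -
    have "sin (complex_of_real \<mu>) \<noteq> 0"
      using \<open>0 < sin \<mu>\<close> by (simp add: sin_of_real)
    then have "dirichlet_ratio n (complex_of_real \<mu>) = complex_of_real (sin (real n * \<mu>) / sin \<mu>)"
      unfolding dirichlet_ratio_def by (simp add: sin_of_real[symmetric])
    then show ?thesis
      unfolding lam_def mu by simp
  qed
  finally show ?thesis ..
qed

section \<open>Monotonicity of \<open>\<sigma>\<close>\<close>

lemma sigma_denominator_ge: "0 \<le> \<rho> \<Longrightarrow> (\<rho> - 1)\<^sup>2 \<le> 1 - 2 * \<rho> * cos \<theta> + \<rho>\<^sup>2" for \<rho> \<theta> :: real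
  using mult_left_mono[OF cos_le_one[of \<theta>], of \<rho>] by (simp add: power2_eq_square algebra_simps)

lemma sigma_strict_mono:
  fixes \<rho> :: real
  assumes \<rho>: "0 < \<rho>" "\<rho> \<noteq> 1" and \<theta>: "0 \<le> \<theta>1" "\<theta>1 < \<theta>2" "\<theta>2 \<le> pi"
  shows "1 < \<rho> \<Longrightarrow> sigma \<rho> \<theta>1 < sigma \<rho> \<theta>2" and "\<rho> < 1 \<Longrightarrow> sigma \<rho> \<theta>2 < sigma \<rho> \<theta>1"
proof -
  define D1 where "D1 = 1 - 2 * \<rho> * cos \<theta>1 + \<rho>\<^sup>2"
  define D2 where "D2 = 1 - 2 * \<rho> * cos \<theta>2 + \<rho>\<^sup>2"
  have "D1 < D2"
    unfolding D1_def D2_def using cos_monotone_0_pi[OF \<theta>] \<rho> by simp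
  moreover have "0 < D1"
    using sigma_denominator_ge[of \<rho> \<theta>1] \<rho> unfolding D1_def by (smt (verit) zero_less_power2)
  ultimately have D: "0 < D1 * D2" "D1 < D2"
    by simp_all
  show "sigma \<rho> \<theta>1 < sigma \<rho> \<theta>2" if "1 < \<rho>"
  proof -
    have "1 - \<rho>\<^sup>2 < 0"
      using less_1_mult[OF that that] by (simp add: power2_eq_square)
    then show ?thesis
      unfolding sigma_def D1_def[symmetric] D2_def[symmetric] using D by (simp add: divide_strict_left_mono_neg)
  qed
  show "sigma \<rho> \<theta>2 < sigma \<rho> \<theta>1" if "\<rho> < 1"
  proof -
    have "0 < 1 - \<rho>\<^sup>2"
      using that \<rho> abs_square_less_1[of \<rho>] by simp
    then show ?thesis
      unfolding sigma_def D1_def[symmetric] D2_def[symmetric]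
      by (rule divide_strict_left_mono[OF D(2)]) (use D(1) in \<open>simp add: mult.commute\<close>)
  qed
qed

lemma sigma_zero:
  assumes "\<rho> \<noteq> 1"
  shows "sigma \<rho> 0 = (1 + \<rho>) / (1 - \<rho>)"
proof -
  have "sigma \<rho> 0 = ((1 - \<rho>) * (1 + \<rho>)) / ((1 - \<rho>) * (1 - \<rho>))"
    unfolding sigma_def by (simp add: power2_eq_square algebra_simps)
  then show ?thesis
    using assms by simp
qed

lemma sigma_pi:
  assumes "0 \<le> \<rho>"
  shows "sigma \<rho> pi = (1 - \<rho>) / (1 + \<rho>)"
proof -
  have "sigma \<rho> pi = ((1 + \<rho>) * (1 - \<rho>)) / ((1 + \<rho>) * (1 + \<rho>))"
    unfolding sigma_def by (simp add: power2_eq_square algebra_simps)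
  then show ?thesis
    using assms by simp
qed

lemma sigma_bounds_gt_one:
  fixes \<rho> :: real
  assumes "1 < \<rho>"
  shows "- (\<rho> + 1) / (\<rho> - 1) \<le> sigma \<rho> \<theta>" and "sigma \<rho> \<theta> < 0"
proof -
  have D: "(\<rho> - 1)\<^sup>2 \<le> 1 - 2 * \<rho> * cos \<theta> + \<rho>\<^sup>2" "0 < (\<rho> - 1)\<^sup>2"
    using sigma_denominator_ge[of \<rho> \<theta>] assms by simp_all
  have N: "1 - \<rho>\<^sup>2 < 0"
    using less_1_mult[OF assms assms] by (simp add: power2_eq_square)
  have Dpos: "0 < 1 - 2 * \<rho> * cos \<theta> + \<rho>\<^sup>2"
    using D by linarith
  then show "sigma \<rho> \<theta> < 0"
    unfolding sigma_def using N by (simp add: divide_neg_pos)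
  have "(1 - \<rho>\<^sup>2) / (\<rho> - 1)\<^sup>2 \<le> sigma \<rho> \<theta>"
    unfolding sigma_def using D N Dpos by (intro divide_left_mono_neg) simp_all
  moreover have "(1 - \<rho>\<^sup>2) / (\<rho> - 1)\<^sup>2 = ((\<rho> - 1) * (- (\<rho> + 1))) / ((\<rho> - 1) * (\<rho> - 1))"
    by (simp add: power2_eq_square algebra_simps)
  then have "(1 - \<rho>\<^sup>2) / (\<rho> - 1)\<^sup>2 = - (\<rho> + 1) / (\<rho> - 1)"
    using assms by simp
  ultimately show "- (\<rho> + 1) / (\<rho> - 1) \<le> sigma \<rho> \<theta>"
    by simp
qed

lemma extraordinary_if_outside_sigma_range:
  assumes "1 < \<rho>" and "0 < y \<or> y < - (\<rho> + 1) / (\<rho> - 1)"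
  shows "extraordinary \<rho> y"
  unfolding extraordinary_def ordinary_def
proof
  assume "\<rho> \<in> {0, 1, -1} \<or> y \<in> {sigma \<rho> \<theta> |\<theta>. - pi < \<theta> \<and> \<theta> \<le> pi}"
  then obtain \<theta> where "y = sigma \<rho> \<theta>"
    using assms(1) by auto
  then show False
    using sigma_bounds_gt_one[OF assms(1), of \<theta>] assms(2) by linarith
qed

section \<open>Ordering of the eigenvalues\<close>

lemma lam_lt_one:
  assumes n: "2 \<le> n" and \<rho>: "0 \<le> \<rho>" "\<rho> < 1" and k: "k < n"
  obtains \<mu> where "lam n \<rho> k = sigma \<rho> \<mu>" "beta n k \<le> \<mu>" "\<mu> \<le> gamma n k" "0 < \<mu>"
proof -
  obtain \<mu> where \<mu>: "mu n \<rho> k = complex_of_real \<mu>" "beta n k \<le> \<mu>" "\<mu> \<le> gamma n k" "0 < \<mu>"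
    "secular_root n \<rho> k \<mu>"
    using mu_lt_one[OF n k \<rho>] .
  moreover have "\<mu> < pi"
    using \<mu>(3) gamma_lt_pi[OF k] by simp
  ultimately show ?thesis
    using that lam_eq_sigma[OF n \<mu>(4) _ \<mu>(5) \<mu>(1)] by simp
qed

lemma lam_ge_one:
  assumes n: "2 \<le> n" and \<rho>: "1 \<le> \<rho>" and k: "1 \<le> k" "k < n" and one: "k = 1 \<Longrightarrow> \<rho> < xi n"
  obtains \<mu> where "lam n \<rho> k = sigma \<rho> \<mu>" "alpha n k < \<mu>" "\<mu> \<le> beta n k"
proof (cases "k = 1")
  case True
  obtain \<mu> where \<mu>: "mu n \<rho> 1 = complex_of_real \<mu>" "0 < \<mu>" "\<mu> \<le> beta n 1" "secular_root n \<rho> 1 \<mu>"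
    using mu_1_real[OF n \<rho> one[OF True]] .
  moreover have "\<mu> < pi"
    using \<mu>(3) beta_lt_pi[of 1 n] n by simp
  moreover have "alpha n 1 = 0"
    unfolding alpha_def by simp
  ultimately show ?thesis
    using that lam_eq_sigma[OF n \<mu>(2) _ \<mu>(4) \<mu>(1)] True by simp
next
  case False
  with k have k2: "2 \<le> k"
    by simp
  obtain \<mu> where \<mu>: "mu n \<rho> k = complex_of_real \<mu>" "alpha n k < \<mu>" "\<mu> \<le> beta n k" "secular_root n \<rho> k \<mu>"
    using mu_ge_one[OF n k2 k(2) \<rho>] .
  moreover have "0 < \<mu>" "\<mu> < pi"
    using \<mu>(2,3) alpha_nonneg[OF n k(1)] beta_lt_pi[OF k(2)] by simp_all
  ultimately show ?thesis
    using that lam_eq_sigma[OF n _ _ \<mu>(4) \<mu>(1)] by simp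
qed

lemma lam_1_at_xi:
  assumes n: "2 \<le> n"
  shows "lam n (xi n) 1 = - real n"
proof -
  obtain x where x: "0 \<le> x" "sh n x = xi n" "mu n (xi n) 1 = \<i> * complex_of_real x"
    using mu_1_hyperbolic[OF n order_refl] .
  have "sh n 0 = xi n"
    unfolding sh_def xi_def by simp
  then have "x = 0"
    using sh_inj[OF n x(1) order_refl] x(2) by simp
  then show ?thesis
    using lam_imaginary_mu[OF x(3)] by simp
qed

lemma sigma_xi_zero:
  assumes n: "2 \<le> n"
  shows "sigma (xi n) 0 = - real n"
proof -
  have "sigma (xi n) 0 = (1 + xi n) / (1 - xi n)"
    using sigma_zero xi_gt_1[OF n] by simp
  also have "\<dots> = - real n"
    using n unfolding xi_def by (simp add: field_simps)
  finally show ?thesis .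
qed

lemma lam_ge_one_sigma:
  assumes n: "2 \<le> n" and \<rho>: "1 \<le> \<rho>" and k: "1 \<le> k" "k < n" and one: "k = 1 \<Longrightarrow> \<rho> \<le> xi n"
  obtains \<mu> where "lam n \<rho> k = sigma \<rho> \<mu>" "0 \<le> \<mu>" "\<mu> \<le> beta n k"
proof (cases "k = 1 \<and> \<rho> = xi n")
  case True
  then show ?thesis
    using that[of 0] lam_1_at_xi[OF n] sigma_xi_zero[OF n] unfolding beta_def by simp
next
  case False
  then obtain \<mu> where "lam n \<rho> k = sigma \<rho> \<mu>" "alpha n k < \<mu>" "\<mu> \<le> beta n k"
    using lam_ge_one[OF n \<rho> k] one by force
  then show ?thesis
    using that alpha_nonneg[OF n k(1)] by simp
qed

lemma lam_strict_mono_gt_one: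
  assumes n: "2 \<le> n" and \<rho>: "1 < \<rho>" and k: "1 \<le> k" "k + 1 < n" and one: "k = 1 \<Longrightarrow> \<rho> \<le> xi n"
  shows "lam n \<rho> k < lam n \<rho> (k + 1)"
proof -
  obtain \<mu> where \<mu>: "lam n \<rho> k = sigma \<rho> \<mu>" "0 \<le> \<mu>" "\<mu> \<le> beta n k"
    using lam_ge_one_sigma[OF n less_imp_le[OF \<rho>] k(1) _ one] k(2) by auto
  have "1 \<le> k + 1"
    by simp
  then obtain \<mu>' where \<mu>': "lam n \<rho> (k + 1) = sigma \<rho> \<mu>'" "alpha n (k + 1) < \<mu>'" "\<mu>' \<le> beta n (k + 1)"
    by (rule lam_ge_one[OF n less_imp_le[OF \<rho>] _ k(2)]) (use k in simp)
  have "\<mu> < \<mu>'"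
    using \<mu>(3) \<mu>'(2) beta_lt_alpha_Suc[OF n k(1)] by simp
  moreover have "\<mu>' \<le> pi"
    using \<mu>'(3) beta_lt_pi[OF k(2)] by simp
  ultimately show ?thesis
    unfolding \<mu>(1) \<mu>'(1) using sigma_strict_mono(1)[OF _ _ \<mu>(2)] \<rho> by simp
qed

lemma lam_lt_sigma_pi_gt_one:
  assumes n: "2 \<le> n" and \<rho>: "1 < \<rho>" and k: "1 \<le> k" "k < n" and one: "k = 1 \<Longrightarrow> \<rho> \<le> xi n"
  shows "lam n \<rho> k < - (\<rho> - 1) / (\<rho> + 1)"
proof -
  obtain \<mu> where \<mu>: "lam n \<rho> k = sigma \<rho> \<mu>" "0 \<le> \<mu>" "\<mu> \<le> beta n k"
    using lam_ge_one_sigma[OF n less_imp_le[OF \<rho>] k one] .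
  then have "sigma \<rho> \<mu> < sigma \<rho> pi"
    using sigma_strict_mono(1)[OF _ _ \<mu>(2)] beta_lt_pi[OF k(2)] \<rho> by simp
  then show ?thesis
    unfolding \<mu>(1) using sigma_pi[of \<rho>] \<rho> by (simp add: field_simps)
qed

lemma sigma_zero_lt_lam_gt_one:
  assumes n: "2 \<le> n" and \<rho>: "1 < \<rho>" and k: "1 \<le> k" "k < n" and one: "k = 1 \<Longrightarrow> \<rho> < xi n"
  shows "- (\<rho> + 1) / (\<rho> - 1) < lam n \<rho> k"
proof -
  obtain \<mu> where \<mu>: "lam n \<rho> k = sigma \<rho> \<mu>" "alpha n k < \<mu>" "\<mu> \<le> beta n k"
    using lam_ge_one[OF n less_imp_le[OF \<rho>] k one] .
  then have "sigma \<rho> 0 < sigma \<rho> \<mu>"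
    using sigma_strict_mono(1)[OF _ _ order_refl] alpha_nonneg[OF n k(1)] beta_lt_pi[OF k(2)] \<rho> by simp
  then show ?thesis
    unfolding \<mu>(1) using sigma_zero[of \<rho>] \<rho> by (simp add: field_simps)
qed

lemma lam_strict_antimono_lt_one:
  assumes n: "2 \<le> n" and \<rho>: "0 < \<rho>" "\<rho> < 1" and k: "k + 1 < n"
  shows "lam n \<rho> (k + 1) < lam n \<rho> k"
proof -
  obtain \<mu> where \<mu>: "lam n \<rho> k = sigma \<rho> \<mu>" "\<mu> \<le> gamma n k" "0 < \<mu>"
    using lam_lt_one[OF n less_imp_le[OF \<rho>(1)] \<rho>(2), of k] k by auto
  obtain \<mu>' where \<mu>': "lam n \<rho> (k + 1) = sigma \<rho> \<mu>'" "beta n (k + 1) \<le> \<mu>'" "\<mu>' \<le> gamma n (k + 1)"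
    using lam_lt_one[OF n less_imp_le[OF \<rho>(1)] \<rho>(2) k] by auto
  have "\<mu> < \<mu>'"
    using \<mu>(2) \<mu>'(2) gamma_lt_beta_Suc[OF n, of k] by simp
  moreover have "\<mu>' \<le> pi"
    using \<mu>'(3) gamma_lt_pi[OF k] by simp
  ultimately show ?thesis
    unfolding \<mu>(1) \<mu>'(1) using sigma_strict_mono(2)[OF _ _ less_imp_le[OF \<mu>(3)]] \<rho> by simp
qed

lemma lam_bounds_lt_one:
  assumes n: "2 \<le> n" and \<rho>: "0 < \<rho>" "\<rho> < 1" and k: "k < n"
  shows "(1 - \<rho>) / (1 + \<rho>) < lam n \<rho> k" and "lam n \<rho> k < (1 + \<rho>) / (1 - \<rho>)"
proof -
  obtain \<mu> where \<mu>: "lam n \<rho> k = sigma \<rho> \<mu>" "\<mu> \<le> gamma n k" "0 < \<mu>"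
    using lam_lt_one[OF n less_imp_le[OF \<rho>(1)] \<rho>(2) k] by auto
  have "\<mu> < pi"
    using \<mu>(2) gamma_lt_pi[OF k] by simp
  then have "sigma \<rho> pi < sigma \<rho> \<mu>" "sigma \<rho> \<mu> < sigma \<rho> 0"
    using sigma_strict_mono(2)[of \<rho> \<mu> pi] sigma_strict_mono(2)[of \<rho> 0 \<mu>] \<mu>(3) \<rho> by simp_all
  then show "(1 - \<rho>) / (1 + \<rho>) < lam n \<rho> k" "lam n \<rho> k < (1 + \<rho>) / (1 - \<rho>)"
    unfolding \<mu>(1) sigma_pi[OF less_imp_le[OF \<rho>(1)]] using sigma_zero[of \<rho>] \<rho> by simp_all
qed

lemma lam_0_extraordinary_eigenvalue:
  assumes n: "2 \<le> n" and \<rho>: "1 < \<rho>"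
  shows "eigenvalue (KMS n \<rho>) (lam n \<rho> 0)" and "extraordinary \<rho> (lam n \<rho> 0)"
proof -
  obtain x where x: "0 < x" "ch n x = \<rho>"
    "lam n \<rho> 0 = (1 - \<rho>\<^sup>2) / (1 + \<rho>\<^sup>2 - 2 * \<rho> * cosh x)" "real n < lam n \<rho> 0"
    using lam_0_hyperbolic[OF n \<rho>] .
  show "eigenvalue (KMS n \<rho>) (lam n \<rho> 0)"
    using eigenvalue_KMS_of_hyperbolic_root[OF n _ _ x(1), of \<rho> cosh] x(2,3) \<rho> ch_iff by auto
  show "extraordinary \<rho> (lam n \<rho> 0)"
    using extraordinary_if_outside_sigma_range[OF \<rho>] x(4) by simp
qed

lemma lam_1_extraordinary_eigenvalue:
  assumes n: "2 \<le> n" and \<rho>: "xi n < \<rho>"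
  shows "eigenvalue (KMS n \<rho>) (lam n \<rho> 1)" and "extraordinary \<rho> (lam n \<rho> 1)"
proof -
  have \<rho>1: "1 < \<rho>"
    using xi_gt_1[OF n] \<rho> by simp
  obtain x where x: "0 < x" "sh n x = \<rho>"
    "lam n \<rho> 1 = (1 - \<rho>\<^sup>2) / (1 + \<rho>\<^sup>2 - 2 * \<rho> * cosh x)" "lam n \<rho> 1 < - real n"
    using lam_1_hyperbolic[OF n \<rho>] .
  have "sinh (x * (real n + 1) / 2) = \<rho> * sinh (x * (real n - 1) / 2)"
    using x(1,2) sh_iff[OF n, of x] by simp
  then show "eigenvalue (KMS n \<rho>) (lam n \<rho> 1)"
    using eigenvalue_KMS_of_hyperbolic_root[OF n _ _ x(1), of \<rho> sinh] x(3) \<rho>1 by simp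
  have "- real n < - (\<rho> + 1) / (\<rho> - 1)"
    using \<rho> \<rho>1 n unfolding xi_def by (simp add: field_simps)
  then show "extraordinary \<rho> (lam n \<rho> 1)"
    using extraordinary_if_outside_sigma_range[OF \<rho>1] x(4) by simp
qed

lemma extraordinary_eigenvalue_cases:
  assumes n: "2 \<le> n" and \<rho>: "1 < \<rho>"
    and eig: "eigenvalue (KMS n \<rho>) x" "extraordinary \<rho> x"
  shows "x = lam n \<rho> 0 \<or> (xi n < \<rho> \<and> x = lam n \<rho> 1)"
proof -
  obtain t where t: "0 < t" and x: "x = (1 - \<rho>\<^sup>2) / (1 + \<rho>\<^sup>2 - 2 * \<rho> * cosh t)"
    and root: "cosh (t * (real n + 1) / 2) = \<rho> * cosh (t * (real n - 1) / 2)
      \<or> sinh (t * (real n + 1) / 2) = \<rho> * sinh (t * (real n - 1) / 2)"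
    using extraordinary_eigenvalue_hyperbolic[OF n _ _ eig] \<rho> by auto
  show ?thesis
  proof (cases "ch n t = \<rho>")
    case True
    obtain x0 where "0 < x0" "ch n x0 = \<rho>" "lam n \<rho> 0 = (1 - \<rho>\<^sup>2) / (1 + \<rho>\<^sup>2 - 2 * \<rho> * cosh x0)"
      using lam_0_hyperbolic[OF n \<rho>] .
    then show ?thesis
      using ch_inj[OF n, of t x0] True t x by simp
  next
    case False
    then have sh: "sh n t = \<rho>"
      using root t sh_iff[OF n, of t] ch_iff by auto
    then have "xi n < \<rho>"
      using xi_lt_sinh_ratio[OF n t] t unfolding sh_def by simp
    moreover obtain x1 where "0 < x1" "sh n x1 = \<rho>"
      "lam n \<rho> 1 = (1 - \<rho>\<^sup>2) / (1 + \<rho>\<^sup>2 - 2 * \<rho> * cosh x1)"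
      using lam_1_hyperbolic[OF n \<open>xi n < \<rho>\<close>] .
    ultimately show ?thesis
      using sh_inj[OF n, of t x1] sh t x by simp
  qed
qed

lemma extraordinary_eigenvalues_gt_one:
  assumes n: "2 \<le> n" and \<rho>: "1 < \<rho>"
  shows "{x. eigenvalue (KMS n \<rho>) x \<and> extraordinary \<rho> x}
       = (if xi n < \<rho> then {lam n \<rho> 0, lam n \<rho> 1} else {lam n \<rho> 0})"
  using lam_0_extraordinary_eigenvalue[OF n \<rho>] lam_1_extraordinary_eigenvalue[OF n]
    extraordinary_eigenvalue_cases[OF n \<rho>] by auto

lemma extraordinary_eigenvalues_le_one:
  assumes n: "2 \<le> n" and \<rho>: "0 \<le> \<rho>" "\<rho> \<le> 1"
  shows "{x. eigenvalue (KMS n \<rho>) x \<and> extraordinary \<rho> x} = {}"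
proof (cases "\<rho> = 0 \<or> \<rho> = 1")
  case True
  then show ?thesis
    unfolding extraordinary_def ordinary_def by auto
next
  case False
  then have \<rho>0: "0 < \<rho>" "\<rho> \<noteq> 1" "\<rho> < 1"
    using \<rho> by auto
  have False if eig: "eigenvalue (KMS n \<rho>) x" "extraordinary \<rho> x" for x
  proof -
    obtain t where "0 < t" and root: "cosh (t * (real n + 1) / 2) = \<rho> * cosh (t * (real n - 1) / 2)
        \<or> sinh (t * (real n + 1) / 2) = \<rho> * sinh (t * (real n - 1) / 2)"
      using extraordinary_eigenvalue_hyperbolic[OF n \<rho>0(1,2) eig] by blast
    then have "0 < t * (real n - 1) / 2" "t * (real n - 1) / 2 < t * (real n + 1) / 2"
      using n by simp_all
    then have "\<rho> * cosh (t * (real n - 1) / 2) < cosh (t * (real n + 1) / 2)"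
      "\<rho> * sinh (t * (real n - 1) / 2) < sinh (t * (real n + 1) / 2)"
      using \<rho>0 mult_strict_right_mono[of \<rho> 1] cosh_real_nonneg_less_iff
      by (smt (verit) cosh_real_pos sinh_real_less_iff sinh_real_pos_iff)+
    with root show False
      by linarith
  qed
  then show ?thesis
    by blast
qed

lemma lam_rho_zero:
  assumes n: "2 \<le> n" and k: "k < n"
  shows "lam n 0 k = 1"
proof -
  obtain \<mu> where "lam n 0 k = sigma 0 \<mu>"
    by (rule lam_lt_one[of n 0 k]) (use n k in simp_all)
  then show ?thesis
    unfolding sigma_def by simp
qed

lemma lam_chain_lt_one:
  assumes n: "2 \<le> n" and \<rho>: "0 < \<rho>" "\<rho> < 1"
  shows "0 < (1 - \<rho>) / (1 + \<rho>) \<and> (1 - \<rho>) / (1 + \<rho>) < lam n \<rho> (n - 1)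
        \<and> (\<forall>k. k + 1 < n \<longrightarrow> lam n \<rho> (k + 1) < lam n \<rho> k)
        \<and> lam n \<rho> 0 < (1 + \<rho>) / (1 - \<rho>)"
  using lam_bounds_lt_one[OF n \<rho>] lam_strict_antimono_lt_one[OF n \<rho>] \<rho> n by simp

lemma lam_rho_one:
  assumes n: "2 \<le> n"
  shows "(\<forall>k. 1 \<le> k \<and> k < n \<longrightarrow> lam n 1 k = 0) \<and> 0 < lam n 1 0 \<and> lam n 1 0 = real n"
proof -
  have "lam n 1 k = 0" if k: "1 \<le> k" "k < n" for k
  proof -
    obtain \<mu> where "lam n 1 k = sigma 1 \<mu>"
      by (rule lam_ge_one[of n 1 k]) (use n k xi_gt_1[OF n] in simp_all)
    then show ?thesis
      unfolding sigma_def by simp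
  qed
  moreover obtain x where x: "0 \<le> x" "ch n x = 1" "mu n 1 0 = \<i> * complex_of_real x"
    using mu_0_hyperbolic[OF n order_refl] .
  have "ch n 0 = 1"
    unfolding ch_def by simp
  then have "x = 0"
    using ch_inj[OF n x(1) order_refl] x(2) by simp
  then have "lam n 1 0 = real n"
    using lam_imaginary_mu[OF x(3)] by simp
  ultimately show ?thesis
    using n by simp
qed

lemma lam_chain_between_one_xi:
  assumes n: "2 \<le> n" and \<rho>: "1 < \<rho>" "\<rho> < xi n"
  shows "- (\<rho> + 1) / (\<rho> - 1) < lam n \<rho> 1
        \<and> (\<forall>k. 1 \<le> k \<and> k + 1 < n \<longrightarrow> lam n \<rho> k < lam n \<rho> (k + 1))
        \<and> lam n \<rho> (n - 1) < - (\<rho> - 1) / (\<rho> + 1)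
        \<and> - (\<rho> - 1) / (\<rho> + 1) < 0 \<and> 0 < real n \<and> real n < lam n \<rho> 0"
proof -
  obtain x where "real n < lam n \<rho> 0"
    using lam_0_hyperbolic[OF n \<rho>(1)] .
  moreover have "lam n \<rho> (n - 1) < - (\<rho> - 1) / (\<rho> + 1)"
    using lam_lt_sigma_pi_gt_one[OF n \<rho>(1), of "n - 1"] n \<rho>(2) by simp
  ultimately show ?thesis
    using sigma_zero_lt_lam_gt_one[OF n \<rho>(1), of 1] lam_strict_mono_gt_one[OF n \<rho>(1)] n \<rho>
    by (simp add: field_simps)
qed

lemma lam_chain_at_xi:
  assumes n: "2 \<le> n" and \<rho>: "\<rho> = xi n"
  shows "- real n = lam n \<rho> 1
        \<and> (\<forall>k. 1 \<le> k \<and> k + 1 < n \<longrightarrow> lam n \<rho> k < lam n \<rho> (k + 1))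
        \<and> lam n \<rho> (n - 1) < - 1 / real n
        \<and> - 1 / real n < 0 \<and> 0 < real n \<and> real n < lam n \<rho> 0"
proof -
  have \<rho>1: "1 < \<rho>"
    using xi_gt_1[OF n] \<rho> by simp
  obtain x where "real n < lam n \<rho> 0"
    using lam_0_hyperbolic[OF n \<rho>1] .
  moreover have "- (\<rho> - 1) / (\<rho> + 1) = - 1 / real n"
    using n unfolding \<rho> xi_def by (simp add: field_simps)
  moreover have "lam n \<rho> (n - 1) < - (\<rho> - 1) / (\<rho> + 1)"
    using lam_lt_sigma_pi_gt_one[OF n \<rho>1, of "n - 1"] n \<rho> by simp
  ultimately show ?thesis
    using lam_1_at_xi[OF n] lam_strict_mono_gt_one[OF n \<rho>1] n \<rho> by simp
qed

lemma lam_chain_gt_xi: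
  assumes n: "2 \<le> n" and \<rho>: "xi n < \<rho>"
  shows "lam n \<rho> 1 < - real n \<and> - real n < - (\<rho> + 1) / (\<rho> - 1)
        \<and> - (\<rho> + 1) / (\<rho> - 1) < - (\<rho> - 1) / (\<rho> + 1)
        \<and> (\<forall>k. 2 \<le> k \<and> k < n \<longrightarrow>
               - (\<rho> + 1) / (\<rho> - 1) < lam n \<rho> k \<and> lam n \<rho> k < - (\<rho> - 1) / (\<rho> + 1))
        \<and> (\<forall>k. 2 \<le> k \<and> k + 1 < n \<longrightarrow> lam n \<rho> k < lam n \<rho> (k + 1))
        \<and> - (\<rho> - 1) / (\<rho> + 1) < 0 \<and> 0 < real n \<and> real n < lam n \<rho> 0"
proof -
  have \<rho>1: "1 < \<rho>"
    using xi_gt_1[OF n] \<rho> by simp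
  obtain x where "real n < lam n \<rho> 0"
    using lam_0_hyperbolic[OF n \<rho>1] .
  moreover obtain x where "lam n \<rho> 1 < - real n"
    using lam_1_hyperbolic[OF n \<rho>] .
  moreover have "- real n < - (\<rho> + 1) / (\<rho> - 1)"
    using \<rho> \<rho>1 n unfolding xi_def by (simp add: field_simps)
  moreover have "- (\<rho> + 1) / (\<rho> - 1) < - (\<rho> - 1) / (\<rho> + 1)"
    using \<rho>1 by (simp add: field_simps)
  ultimately show ?thesis
    using sigma_zero_lt_lam_gt_one[OF n \<rho>1] lam_lt_sigma_pi_gt_one[OF n \<rho>1]
      lam_strict_mono_gt_one[OF n \<rho>1] n \<rho>1 by (simp add: field_simps)
qed

theorem theorem6p6:
  fixes n :: nat and \<rho> :: real
  assumes "n \<ge> 2" and "\<rho> \<ge> 0"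
  shows
   "(\<rho> > xi n \<longrightarrow>
        {x. eigenvalue (KMS n \<rho>) x \<and> extraordinary \<rho> x} = {lam n \<rho> 0, lam n \<rho> 1}
        \<and> lam n \<rho> 0 \<noteq> lam n \<rho> 1)
  \<and> (1 < \<rho> \<and> \<rho> \<le> xi n \<longrightarrow>
        {x. eigenvalue (KMS n \<rho>) x \<and> extraordinary \<rho> x} = {lam n \<rho> 0})
  \<and> (\<rho> \<le> 1 \<longrightarrow>
        {x. eigenvalue (KMS n \<rho>) x \<and> extraordinary \<rho> x} = {})
  \<and> (\<rho> = 0 \<longrightarrow> (\<forall>k<n. lam n \<rho> k = 1))
  \<and> (0 < \<rho> \<and> \<rho> < 1 \<longrightarrow>
        0 < (1 - \<rho>) / (1 + \<rho>) \<and> (1 - \<rho>) / (1 + \<rho>) < lam n \<rho> (n - 1)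
        \<and> (\<forall>k. k + 1 < n \<longrightarrow> lam n \<rho> (k + 1) < lam n \<rho> k)
        \<and> lam n \<rho> 0 < (1 + \<rho>) / (1 - \<rho>))
  \<and> (\<rho> = 1 \<longrightarrow>
        (\<forall>k. 1 \<le> k \<and> k < n \<longrightarrow> lam n \<rho> k = 0) \<and> 0 < lam n \<rho> 0 \<and> lam n \<rho> 0 = real n)
  \<and> (1 < \<rho> \<and> \<rho> < xi n \<longrightarrow>
        - (\<rho> + 1) / (\<rho> - 1) < lam n \<rho> 1
        \<and> (\<forall>k. 1 \<le> k \<and> k + 1 < n \<longrightarrow> lam n \<rho> k < lam n \<rho> (k + 1))
        \<and> lam n \<rho> (n - 1) < - (\<rho> - 1) / (\<rho> + 1)
        \<and> - (\<rho> - 1) / (\<rho> + 1) < 0 \<and> 0 < real n \<and> real n < lam n \<rho> 0)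
  \<and> (\<rho> = xi n \<longrightarrow>
        - real n = lam n \<rho> 1
        \<and> (\<forall>k. 1 \<le> k \<and> k + 1 < n \<longrightarrow> lam n \<rho> k < lam n \<rho> (k + 1))
        \<and> lam n \<rho> (n - 1) < - 1 / real n
        \<and> - 1 / real n < 0 \<and> 0 < real n \<and> real n < lam n \<rho> 0)
  \<and> (\<rho> > xi n \<longrightarrow>
        lam n \<rho> 1 < - real n \<and> - real n < - (\<rho> + 1) / (\<rho> - 1)
        \<and> - (\<rho> + 1) / (\<rho> - 1) < - (\<rho> - 1) / (\<rho> + 1)
        \<and> (\<forall>k. 2 \<le> k \<and> k < n \<longrightarrow>
               - (\<rho> + 1) / (\<rho> - 1) < lam n \<rho> k \<and> lam n \<rho> k < - (\<rho> - 1) / (\<rho> + 1))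
        \<and> (\<forall>k. 2 \<le> k \<and> k + 1 < n \<longrightarrow> lam n \<rho> k < lam n \<rho> (k + 1))
        \<and> - (\<rho> - 1) / (\<rho> + 1) < 0 \<and> 0 < real n \<and> real n < lam n \<rho> 0)"
proof -
  have n: "2 \<le> n"
    using assms(1) .
  have extraordinary_sets:
    "xi n < \<rho> \<Longrightarrow> {x. eigenvalue (KMS n \<rho>) x \<and> extraordinary \<rho> x} = {lam n \<rho> 0, lam n \<rho> 1}"
    "1 < \<rho> \<Longrightarrow> \<rho> \<le> xi n \<Longrightarrow> {x. eigenvalue (KMS n \<rho>) x \<and> extraordinary \<rho> x} = {lam n \<rho> 0}"
    using extraordinary_eigenvalues_gt_one[OF n] xi_gt_1[OF n] by auto
  have "lam n \<rho> 0 \<noteq> lam n \<rho> 1" if "xi n < \<rho>"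
    using lam_chain_gt_xi[OF n that] by linarith
  then show ?thesis
    using extraordinary_sets extraordinary_eigenvalues_le_one[OF n assms(2)] lam_rho_zero[OF n]
      lam_chain_lt_one[OF n] lam_rho_one[OF n] lam_chain_between_one_xi[OF n] lam_chain_at_xi[OF n]
      lam_chain_gt_xi[OF n]
    by (intro conjI impI) simp_all
qed

end
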